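(* Under the standing assumptions below, assume in addition the Slater-type condition: there exists $\epsilon>0$ such that for every $s_0\in\mathcal S$, $x_0\in\mathcal X$ there is a $P$ feasible for the ex-ante lottery problem for $(x_0,s_0)$ with $\mathbb E^{a\sim P}_{s_0}\big(\sum_{t\ge0}\beta^tg^i(x(s^t),a(s^t),s_t)-\bar g^i\big)\ge\epsilon$ for all $i=1,\dots,I$. Then for every $x\in\mathcal X$, $s\in\mathcal S$, $\gamma\in\mathbb R^I_+$ there exists $\lambda^*\in\mathbb R^I_+$ attaining the infimum in $$\inf_{\lambda\in\mathbb R^I_+}\sup_{a\in\tilde{\mathcal A}(x,s)}\Big[r(x,a,s)+\sum_{i}\big(\gamma^ig^i(x,a,s)+\lambda^i(g^i(x,a,s)-\bar g^i)\big)+\beta\mathbb E_sD(\gamma+\lambda,\zeta(x,a,s),s')\Big].$$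
   Context: Setup. Let $\mathcal S$ be a finite set and $(s_t)_{t\ge0}$ a Markov chain on $\mathcal S$ with transition probabilities $\pi(s'|s)>0$ for all $s,s'\in\mathcal S$; for $s^t=(s_0,\dots,s_t)\in\mathcal S^{t+1}$ write $\pi^t(s^t|s_0)$ for its probability given $s_0$ and $\mathbb E_{s^t}$ (or $\mathbb E_{s_t}$) for expectation over future shocks given $s^t$; $\mathbb E_s$ denotes expectation over $s'\sim\pi(\cdot|s)$. Let $\mathcal A\subset\mathbb R^n$ be a finite set, $\mathcal X\subseteq\mathbb R^m$ a countable set, $\zeta:\mathcal X\times\mathcal A\times\mathcal S\to\mathcal X$, $p:\mathcal X\times\mathcal A\times\mathcal S\to\mathbb R$, $r,g^1,\dots,g^I$ bounded real functions on $\mathcal X\times\mathcal A\times\mathcal S$, $\bar g^i\in\mathbb R$, $\beta\in(0,1)$. A plan is $a=(a(s^t))_{t,s^t}$, $a(s^t)\in\mathcal A$, inducing $x(s^0)=x_0$, $x(s^{t+1})=\zeta(x(s^t),a(s^t),s_t)$. $\tilde{\mathcal A}(x,s)=\{a\in\mathcal A:p(x,a,s)\ge0\}$; $\tilde{\mathcal A}^\infty(x_0)$ is the set of plans with $a(s^t)\in\tilde{\mathcal A}(x(s^t),s_t)$ for all $t,s^t$. A plan is feasible for $(x_0,s_0)$ if it lies in $\tilde{\mathcal A}^\infty(x_0)$ and $\mathbb E_{s_t}\sum_{n\ge0}\beta^ng^i(x(s^{t+n}),a(s^{t+n}),s_{t+n})\ge\bar g^i$ for all $t,s^t,i$. Standing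 assumption: for every $(x_0,s_0)$ a feasible plan exists. Pre-action histories $h^t=(s_0,a_0,\dots,s_{t-1},a_{t-1},s_t)\in\mathcal H^t=\mathcal S^{t+1}\times\mathcal A^t$; a plan generates $h^t=(s_0,a(s^0),\dots,a(s^{t-1}),s_t)$ along $s^t$. Dual value: $\Lambda$ is the set of $(\lambda^i(h^t))_{t,h^t,i}$, $\lambda^i(h^t)\ge0$, $\sum_t\sum_{h^t}\sum_i\beta^t\lambda^i(h^t)\pi^t(s^t|s_0)<\infty$. $L(a,\lambda;\gamma,x_0,s_0)=\mathbb E_{s_0}\sum_t\beta^t\big[r(x(s^t),a(s^t),s_t)+\sum_i\gamma^ig^i(x(s^t),a(s^t),s_t)+\sum_i\lambda^i(h^t)(\sum_{n\ge0}\beta^ng^i(x(s^{t+n}),a(s^{t+n}),s_{t+n})-\bar g^i)\big]$ and $D(\gamma,x_0,s_0)=\inf_{\lambda\in\Lambda}\sup_{a\in\tilde{\mathcal A}^\infty(x_0)}L$. Ex-ante lottery problem. Give $\tilde{\mathcal A}^\infty(x_0)$ the product topology and let $\mathcal P(\tilde{\mathcal A}^\infty(x_0))$ be the set of Borel probability measures on it; a random plan $a\sim P$ is drawn independently of the shocks. $P$ is feasible for $(x_0,s_0)$ if for all $t\ge0$, all $h^t=(s_0,\tilde a_0,\dots,s_{t-1},\tilde a_{t-1},s_t)\in\mathcal H^t$ and all $i$, $\mathbb E^{a\sim P}_{s^t}\Big[\mathbf 1\{(a(s^0),\dots,a(s^{t-1}))=(\tilde a_0,\dots,\tilde a_{t-1})\}\Big(\sum_{n\ge0}\beta^ng^i(x(s^{t+n}),a(s^{t+n}),s_{t+n})-\bar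 g^i\Big)\Big]\ge0$, where $s^t$ is the shock history contained in $h^t$. *)

theory Defs
  imports "HOL-Probability.Probability"
begin

text \<open>Shock histories s^t = [s_0,...,s_t] are nonempty lists. pi s s' is pi(s'|s).\<close>

fun path_prob :: "('s \<Rightarrow> 's \<Rightarrow> real) \<Rightarrow> 's list \<Rightarrow> real" where
  "path_prob \<pi> (s # s' # ss) = \<pi> s s' * path_prob \<pi> (s' # ss)"
| "path_prob \<pi> _ = 1"

definition hists :: "'s \<Rightarrow> nat \<Rightarrow> 's list set" where
  "hists s0 t = {h. length h = Suc t \<and> hd h = s0}"

text \<open>State x(take (k+1) h) induced by plan a along history h.\<close>
primrec xk :: "('x \<Rightarrow> 'a \<Rightarrow> 's \<Rightarrow> 'x) \<Rightarrow> ('s list \<Rightarrow> 'a) \<Rightarrow> 'x \<Rightarrow> 's list \<Rightarrow> nat \<Rightarrow> 'x" where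
  "xk \<zeta> a x0 h 0 = x0"
| "xk \<zeta> a x0 h (Suc k) = \<zeta> (xk \<zeta> a x0 h k) (a (take (Suc k) h)) (h ! k)"

definition xof :: "('x \<Rightarrow> 'a \<Rightarrow> 's \<Rightarrow> 'x) \<Rightarrow> ('s list \<Rightarrow> 'a) \<Rightarrow> 'x \<Rightarrow> 's list \<Rightarrow> 'x" where
  "xof \<zeta> a x0 h = xk \<zeta> a x0 h (length h - 1)"

definition payoff :: "('x \<Rightarrow> 'a \<Rightarrow> 's \<Rightarrow> real) \<Rightarrow> ('x \<Rightarrow> 'a \<Rightarrow> 's \<Rightarrow> 'x) \<Rightarrow> ('s list \<Rightarrow> 'a) \<Rightarrow> 'x \<Rightarrow> 's list \<Rightarrow> real" where
  "payoff f \<zeta> a x0 h = f (xof \<zeta> a x0 h) (a h) (last h)"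

definition cont_exp :: "('s \<Rightarrow> 's \<Rightarrow> real) \<Rightarrow> 's list \<Rightarrow> nat \<Rightarrow> ('s list \<Rightarrow> real) \<Rightarrow> real" where
  "cont_exp \<pi> h n f = (\<Sum>c\<in>{c. length c = n}. path_prob \<pi> (last h # c) * f (h @ c))"

definition disc_cont :: "('x \<Rightarrow> 'a \<Rightarrow> 's \<Rightarrow> real) \<Rightarrow> ('x \<Rightarrow> 'a \<Rightarrow> 's \<Rightarrow> 'x) \<Rightarrow> real \<Rightarrow> ('s \<Rightarrow> 's \<Rightarrow> real)
    \<Rightarrow> ('s list \<Rightarrow> 'a) \<Rightarrow> 'x \<Rightarrow> 's list \<Rightarrow> real" where
  "disc_cont f \<zeta> \<beta> \<pi> a x0 h = (\<Sum>n. \<beta> ^ n * cont_exp \<pi> h n (payoff f \<zeta> a x0))"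

definition Atil :: "'a set \<Rightarrow> ('x \<Rightarrow> 'a \<Rightarrow> 's \<Rightarrow> real) \<Rightarrow> 'x \<Rightarrow> 's \<Rightarrow> 'a set" where
  "Atil A p x s = {a\<in>A. 0 \<le> p x a s}"

definition Atil_inf :: "'a set \<Rightarrow> ('x \<Rightarrow> 'a \<Rightarrow> 's \<Rightarrow> real) \<Rightarrow> ('x \<Rightarrow> 'a \<Rightarrow> 's \<Rightarrow> 'x) \<Rightarrow> 'x
    \<Rightarrow> ('s list \<Rightarrow> 'a) set" where
  "Atil_inf A p \<zeta> x0 = {a. \<forall>h. h \<noteq> [] \<longrightarrow> a h \<in> Atil A p (xof \<zeta> a x0 h) (last h)}"

definition feasible_plan :: "'a set \<Rightarrow> ('x \<Rightarrow> 'a \<Rightarrow> 's \<Rightarrow> real) \<Rightarrow> ('x \<Rightarrow> 'a \<Rightarrow> 's \<Rightarrow> 'x) \<Rightarrow> real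
    \<Rightarrow> ('s \<Rightarrow> 's \<Rightarrow> real) \<Rightarrow> ('i \<Rightarrow> 'x \<Rightarrow> 'a \<Rightarrow> 's \<Rightarrow> real) \<Rightarrow> ('i \<Rightarrow> real)
    \<Rightarrow> ('s list \<Rightarrow> 'a) \<Rightarrow> 'x \<Rightarrow> 's \<Rightarrow> bool" where
  "feasible_plan A p \<zeta> \<beta> \<pi> g gbar a x0 s0 \<longleftrightarrow>
     a \<in> Atil_inf A p \<zeta> x0 \<and>
     (\<forall>h i. h \<noteq> [] \<and> hd h = s0 \<longrightarrow> gbar i \<le> disc_cont (g i) \<zeta> \<beta> \<pi> a x0 h)"

text \<open>Action part of the pre-action history h^t generated by plan a along s^t.\<close>
definition act_hist :: "('s list \<Rightarrow> 'a) \<Rightarrow> 's list \<Rightarrow> 'a list" where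
  "act_hist a h = map (\<lambda>k. a (take (Suc k) h)) [0..<length h - 1]"

text \<open>The multiplier set Lambda (given s_0); h^t is represented as (s^t, [a_0..a_{t-1}]).\<close>
definition Lam :: "'a set \<Rightarrow> real \<Rightarrow> ('s \<Rightarrow> 's \<Rightarrow> real) \<Rightarrow> 's
    \<Rightarrow> ('i::finite \<Rightarrow> 's list \<times> 'a list \<Rightarrow> real) set" where
  "Lam A \<beta> \<pi> s0 = {lam. (\<forall>i h. 0 \<le> lam i h) \<and>
     summable (\<lambda>t. \<beta> ^ t * (\<Sum>sh\<in>hists s0 t. \<Sum>ah\<in>{ah. length ah = t \<and> set ah \<subseteq> A}.
                     \<Sum>i\<in>UNIV. lam i (sh, ah) * path_prob \<pi> sh))}"

definition Lag :: "('x \<Rightarrow> 'a \<Rightarrow> 's \<Rightarrow> real) \<Rightarrow> ('i::finite \<Rightarrow> 'x \<Rightarrow> 'a \<Rightarrow> 's \<Rightarrow> real) \<Rightarrow> ('i \<Rightarrow> real)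
    \<Rightarrow> ('x \<Rightarrow> 'a \<Rightarrow> 's \<Rightarrow> 'x) \<Rightarrow> real \<Rightarrow> ('s \<Rightarrow> 's \<Rightarrow> real) \<Rightarrow> ('i \<Rightarrow> real)
    \<Rightarrow> ('s list \<Rightarrow> 'a) \<Rightarrow> ('i \<Rightarrow> 's list \<times> 'a list \<Rightarrow> real) \<Rightarrow> 'x \<Rightarrow> 's \<Rightarrow> real" where
  "Lag r g gbar \<zeta> \<beta> \<pi> \<gamma> a lam x0 s0 =
     (\<Sum>t. \<beta> ^ t * (\<Sum>sh\<in>hists s0 t. path_prob \<pi> sh *
        (payoff r \<zeta> a x0 sh + (\<Sum>i\<in>UNIV. \<gamma> i * payoff (g i) \<zeta> a x0 sh)
         + (\<Sum>i\<in>UNIV. lam i (sh, act_hist a sh) * (disc_cont (g i) \<zeta> \<beta> \<pi> a x0 sh - gbar i)))))"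

definition Dval :: "'a set \<Rightarrow> ('x \<Rightarrow> 'a \<Rightarrow> 's \<Rightarrow> real) \<Rightarrow> ('x \<Rightarrow> 'a \<Rightarrow> 's \<Rightarrow> real)
    \<Rightarrow> ('i::finite \<Rightarrow> 'x \<Rightarrow> 'a \<Rightarrow> 's \<Rightarrow> real) \<Rightarrow> ('i \<Rightarrow> real)
    \<Rightarrow> ('x \<Rightarrow> 'a \<Rightarrow> 's \<Rightarrow> 'x) \<Rightarrow> real \<Rightarrow> ('s \<Rightarrow> 's \<Rightarrow> real) \<Rightarrow> ('i \<Rightarrow> real) \<Rightarrow> 'x \<Rightarrow> 's \<Rightarrow> ereal" where
  "Dval A p r g gbar \<zeta> \<beta> \<pi> \<gamma> x0 s0 =
     (INF lam\<in>Lam A \<beta> \<pi> s0. SUP a\<in>Atil_inf A p \<zeta> x0. ereal (Lag r g gbar \<zeta> \<beta> \<pi> \<gamma> a lam x0 s0))"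

text \<open>Feasible lottery: a probability measure on plans (product sigma-algebra of the
  discrete action set = Borel sigma-algebra of the product topology) concentrated on
  Atil_inf x0, satisfying the ex-ante constraints.\<close>
definition lottery_feasible :: "'a set \<Rightarrow> ('x \<Rightarrow> 'a \<Rightarrow> 's \<Rightarrow> real) \<Rightarrow> ('x \<Rightarrow> 'a \<Rightarrow> 's \<Rightarrow> 'x) \<Rightarrow> real
    \<Rightarrow> ('s \<Rightarrow> 's \<Rightarrow> real) \<Rightarrow> ('i \<Rightarrow> 'x \<Rightarrow> 'a \<Rightarrow> 's \<Rightarrow> real) \<Rightarrow> ('i \<Rightarrow> real)
    \<Rightarrow> ('s list \<Rightarrow> 'a) measure \<Rightarrow> 'x \<Rightarrow> 's \<Rightarrow> bool" where
  "lottery_feasible A p \<zeta> \<beta> \<pi> g gbar P x0 s0 \<longleftrightarrow>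
     prob_space P \<and> sets P = sets (Pi\<^sub>M UNIV (\<lambda>_. count_space A)) \<and>
     (AE a in P. a \<in> Atil_inf A p \<zeta> x0) \<and>
     (\<forall>t sh ah i. sh \<in> hists s0 t \<longrightarrow> length ah = t \<longrightarrow> set ah \<subseteq> A \<longrightarrow>
        0 \<le> (\<integral>a. (if act_hist a sh = ah then 1 else 0) *
                    (disc_cont (g i) \<zeta> \<beta> \<pi> a x0 sh - gbar i) \<partial>P))"

definition bellman_obj :: "'a set \<Rightarrow> ('x \<Rightarrow> 'a \<Rightarrow> 's \<Rightarrow> real) \<Rightarrow> ('x \<Rightarrow> 'a \<Rightarrow> 's \<Rightarrow> real)
    \<Rightarrow> ('i::finite \<Rightarrow> 'x \<Rightarrow> 'a \<Rightarrow> 's \<Rightarrow> real) \<Rightarrow> ('i \<Rightarrow> real)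
    \<Rightarrow> ('x \<Rightarrow> 'a \<Rightarrow> 's \<Rightarrow> 'x) \<Rightarrow> real \<Rightarrow> ('s::finite \<Rightarrow> 's \<Rightarrow> real) \<Rightarrow> ('i \<Rightarrow> real)
    \<Rightarrow> 'x \<Rightarrow> 's \<Rightarrow> ('i \<Rightarrow> real) \<Rightarrow> ereal" where
  "bellman_obj A p r g gbar \<zeta> \<beta> \<pi> \<gamma> x s lam =
     (SUP a\<in>Atil A p x s.
        ereal (r x a s + (\<Sum>i\<in>UNIV. \<gamma> i * g i x a s + lam i * (g i x a s - gbar i)))
        + ereal \<beta> * (\<Sum>s'\<in>UNIV. ereal (\<pi> s s') *
              Dval A p r g gbar \<zeta> \<beta> \<pi> (\<lambda>i. \<gamma> i + lam i) (\<zeta> x a s) s'))"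

end

theory Submission
  imports Defs
begin

(* The dual value D is finite: zero multipliers bound it from above, and weak duality,
   integrated against a feasible lottery, bounds it from below by the expected objective of
   the lottery.  Conditioning the Slater lottery on its first action and applying weak duality
   to each continuation shows that the one-step objective at (x, s, lambda) dominates the
   expected objective of the lottery under gamma + lambda, which by the Slater slack is at
   least -C + eps * sum_i lambda_i.  Hence the objective is coercive on the nonnegative
   orthant.  Since D is Lipschitz in gamma, the objective is Lipschitz in lambda, so it
   attains its infimum on a compact box, and by coercivity that is the global infimum. *)

section \<open>Histories, path probabilities and conditional expectations\<close>

lemma sum_lists_length_Suc:
  fixes F :: "'s::finite list \<Rightarrow> real"
  shows "(\<Sum>c\<in>{c. length c = Suc n}. F c) = (\<Sum>y\<in>UNIV. \<Sum>c\<in>{c. length c = n}. F (y # c))"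
proof -
  have "{c::'s list. length c = Suc n} = (\<lambda>(y, c). y # c) ` (UNIV \<times> {c. length c = n})"
    by (auto simp: length_Suc_conv image_iff)
  moreover have "inj_on (\<lambda>(y, c). y # c) (UNIV \<times> {c::'s list. length c = n})"
    by (auto simp: inj_on_def)
  ultimately have "(\<Sum>c\<in>{c. length c = Suc n}. F c)
      = (\<Sum>yc\<in>UNIV \<times> {c. length c = n}. F ((\<lambda>(y, c). y # c) yc))"
    by (simp add: sum.reindex)
  then show ?thesis
    by (simp add: sum.cartesian_product split_def)
qed

lemma lists_length_0: "{c. length c = 0} = {[]}"
  by auto

lemma path_prob_nonneg: "(\<And>s s'. 0 \<le> \<pi> s s') \<Longrightarrow> 0 \<le> path_prob \<pi> l"
  by (induction \<pi> l rule: path_prob.induct) auto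

lemma sum_path_prob:
  fixes \<pi> :: "'s::finite \<Rightarrow> 's \<Rightarrow> real"
  assumes "\<And>s. (\<Sum>s'\<in>UNIV. \<pi> s s') = 1"
  shows "(\<Sum>c\<in>{c. length c = n}. path_prob \<pi> (s # c)) = 1"
proof (induction n arbitrary: s)
  case 0
  then show ?case by (simp add: lists_length_0)
next
  case (Suc n)
  have "(\<Sum>c\<in>{c. length c = Suc n}. path_prob \<pi> (s # c))
      = (\<Sum>y\<in>UNIV. \<pi> s y * (\<Sum>c\<in>{c. length c = n}. path_prob \<pi> (y # c)))"
    by (simp add: sum_lists_length_Suc sum_distrib_left)
  then show ?case using assms by (simp add: Suc)
qed

lemma cont_exp_0 [simp]: "cont_exp \<pi> h 0 F = F h"
  by (simp add: cont_exp_def lists_length_0)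

lemma cont_exp_Suc:
  fixes \<pi> :: "'s::finite \<Rightarrow> 's \<Rightarrow> real"
  shows "cont_exp \<pi> h (Suc n) F = (\<Sum>s'\<in>UNIV. \<pi> (last h) s' * cont_exp \<pi> (h @ [s']) n F)"
  unfolding cont_exp_def sum_lists_length_Suc
  by (simp add: sum_distrib_left mult.assoc)

lemma cont_exp_Cons: "h \<noteq> [] \<Longrightarrow> cont_exp \<pi> (s # h) n F = cont_exp \<pi> h n (\<lambda>l. F (s # l))"
  by (simp add: cont_exp_def)

lemma cont_exp_cong:
  "(\<And>c. length c = n \<Longrightarrow> F (h @ c) = G (h @ c)) \<Longrightarrow> cont_exp \<pi> h n F = cont_exp \<pi> h n G"
  unfolding cont_exp_def by (rule sum.cong) auto

lemma cont_exp_singleton: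
  fixes \<pi> :: "'s::finite \<Rightarrow> 's \<Rightarrow> real"
  shows "cont_exp \<pi> [s0] t F = (\<Sum>sh\<in>hists s0 t. path_prob \<pi> sh * F sh)"
proof -
  have hists: "hists s0 t = Cons s0 ` {c. length c = t}"
    by (auto simp: hists_def length_Suc_conv image_iff)
  show ?thesis
    unfolding cont_exp_def hists by (subst sum.reindex) (auto simp: inj_on_def)
qed

lemma abs_cont_exp_le:
  fixes \<pi> :: "'s::finite \<Rightarrow> 's \<Rightarrow> real"
  assumes "\<And>s s'. 0 \<le> \<pi> s s'" and "\<And>s. (\<Sum>s'\<in>UNIV. \<pi> s s') = 1"
    and "\<And>c. length c = n \<Longrightarrow> \<bar>F (h @ c)\<bar> \<le> B"
  shows "\<bar>cont_exp \<pi> h n F\<bar> \<le> B"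
proof -
  have "\<bar>cont_exp \<pi> h n F\<bar> \<le> (\<Sum>c\<in>{c. length c = n}. \<bar>path_prob \<pi> (last h # c) * F (h @ c)\<bar>)"
    unfolding cont_exp_def by (rule sum_abs)
  also have "\<dots> \<le> (\<Sum>c\<in>{c. length c = n}. path_prob \<pi> (last h # c) * B)"
    by (rule sum_mono)
       (auto simp: abs_mult path_prob_nonneg[OF assms(1)] intro!: mult_left_mono assms(3))
  also have "\<dots> = B"
    by (simp add: sum_distrib_right[symmetric] sum_path_prob[OF assms(2)])
  finally show ?thesis .
qed

definition plan_in :: "'a set \<Rightarrow> ('s list \<Rightarrow> 'a) \<Rightarrow> bool" where
  "plan_in A a \<longleftrightarrow> (\<forall>h. h \<noteq> [] \<longrightarrow> a h \<in> A)"

lemma Atil_inf_plan_in: "a \<in> Atil_inf A p \<zeta> x \<Longrightarrow> plan_in A a"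
  unfolding Atil_inf_def plan_in_def Atil_def by auto

lemma Atil_inf_first_action:
  assumes "a \<in> Atil_inf A p \<zeta> x"
  shows "a [s] \<in> Atil A p x s"
proof -
  have "a [s] \<in> Atil A p (xof \<zeta> a x [s]) (last [s])"
    using assms unfolding Atil_inf_def by blast
  then show ?thesis by (simp add: xof_def)
qed

lemma xk_cong:
  "(\<And>k. k \<le> length h \<Longrightarrow> a (take k h) = b (take k h)) \<Longrightarrow> j \<le> length h \<Longrightarrow>
    xk \<zeta> a x0 h j = xk \<zeta> b x0 h j"
  by (induction j) auto

lemma act_hist_cong:
  "(\<And>k. k \<le> length h \<Longrightarrow> a (take k h) = b (take k h)) \<Longrightarrow> act_hist a h = act_hist b h"
  unfolding act_hist_def by auto

lemma payoff_cong:
  assumes "\<And>k. k \<le> length h \<Longrightarrow> a (take k h) = b (take k h)"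
  shows "payoff f \<zeta> a x0 h = payoff f \<zeta> b x0 h"
proof -
  have "a h = b h" using assms[of "length h"] by simp
  moreover have "xk \<zeta> a x0 h (length h - 1) = xk \<zeta> b x0 h (length h - 1)"
    by (rule xk_cong) (use assms in auto)
  ultimately show ?thesis
    unfolding payoff_def xof_def by simp
qed

definition shift_plan :: "'s \<Rightarrow> ('s list \<Rightarrow> 'a) \<Rightarrow> 's list \<Rightarrow> 'a" where
  "shift_plan s a = (\<lambda>h. a (s # h))"

lemma xk_shift_plan: "xk \<zeta> a x (s # l) (Suc k) = xk \<zeta> (shift_plan s a) (\<zeta> x (a [s]) s) l k"
  by (induction k) (simp_all add: shift_plan_def)

lemma xof_shift_plan:
  "l \<noteq> [] \<Longrightarrow> xof \<zeta> a x (s # l) = xof \<zeta> (shift_plan s a) (\<zeta> x (a [s]) s) l"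
  unfolding xof_def by (cases l) (simp_all add: xk_shift_plan[symmetric])

lemma payoff_shift_plan:
  "l \<noteq> [] \<Longrightarrow> payoff f \<zeta> a x (s # l) = payoff f \<zeta> (shift_plan s a) (\<zeta> x (a [s]) s) l"
  by (simp add: payoff_def xof_shift_plan shift_plan_def)

lemma disc_cont_shift_plan:
  "l \<noteq> [] \<Longrightarrow> disc_cont f \<zeta> \<beta> \<pi> a x (s # l) = disc_cont f \<zeta> \<beta> \<pi> (shift_plan s a) (\<zeta> x (a [s]) s) l"
  unfolding disc_cont_def cont_exp_Cons
  by (intro suminf_cong arg_cong2[where f="(*)"] refl cont_exp_cong) (simp add: payoff_shift_plan)

lemma act_hist_shift_plan:
  assumes "l \<noteq> []"
  shows "act_hist a (s # l) = a [s] # act_hist (shift_plan s a) l"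
proof -
  obtain m where m: "length l = Suc m" using assms by (cases l) auto
  have "[0..<Suc m] = 0 # map Suc [0..<m]" by (simp add: upt_conv_Cons map_Suc_upt)
  then show ?thesis using m unfolding act_hist_def shift_plan_def by simp
qed

lemma Atil_inf_shift_plan:
  fixes a :: "'s list \<Rightarrow> 'a"
  assumes "a \<in> Atil_inf A p \<zeta> x"
  shows "shift_plan s a \<in> Atil_inf A p \<zeta> (\<zeta> x (a [s]) s)"
  unfolding Atil_inf_def
proof (intro CollectI allI impI)
  fix h :: "'s list" assume h: "h \<noteq> []"
  have "a (s # h) \<in> Atil A p (xof \<zeta> a x (s # h)) (last (s # h))"
    using assms unfolding Atil_inf_def by blast
  then show "shift_plan s a h \<in> Atil A p (xof \<zeta> (shift_plan s a) (\<zeta> x (a [s]) s) h) (last h)"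
    using h by (simp add: xof_shift_plan shift_plan_def)
qed

definition first_action_ind :: "'s \<Rightarrow> 'a \<Rightarrow> ('s list \<Rightarrow> 'a) \<Rightarrow> real" where
  "first_action_ind s a0 a = (if a [s] = a0 then 1 else 0)"

lemma sum_first_action_ind:
  assumes "finite A" "a [s] \<in> A"
  shows "(\<Sum>a0\<in>A. first_action_ind s a0 a * F a0) = F (a [s])"
proof -
  have "(\<Sum>a0\<in>A. first_action_ind s a0 a * F a0) = (\<Sum>a0\<in>A. if a [s] = a0 then F a0 else 0)"
    by (rule sum.cong) (auto simp: first_action_ind_def)
  then show ?thesis using assms by simp
qed

section \<open>Minimisation of coercive Lipschitz functions\<close>

lemma continuous_on_lipschitz_sum_abs:
  fixes f :: "('i::finite \<Rightarrow> real) \<Rightarrow> real"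
  assumes lip: "\<And>l1 l2. f l1 \<le> f l2 + K * (\<Sum>i\<in>UNIV. \<bar>l1 i - l2 i\<bar>)" and "0 \<le> K"
  shows "continuous_on S (\<lambda>v :: real ^ 'i. f (\<lambda>i. v $ i))"
proof (rule lipschitz_on_continuous_on[OF lipschitz_onI])
  fix v w :: "real ^ 'i"
  have "(\<Sum>i\<in>UNIV. \<bar>v $ i - w $ i\<bar>) \<le> (\<Sum>i\<in>(UNIV::'i set). dist v w)"
    by (rule sum_mono) (metis component_le_norm_cart dist_norm vector_minus_component)
  then have "K * (\<Sum>i\<in>UNIV. \<bar>v $ i - w $ i\<bar>) \<le> K * (CARD('i) * dist v w)"
    using \<open>0 \<le> K\<close> by (simp add: mult_left_mono)
  moreover have "f (\<lambda>i. v $ i) \<le> f (\<lambda>i. w $ i) + K * (\<Sum>i\<in>UNIV. \<bar>v $ i - w $ i\<bar>)"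
    by (rule lip)
  moreover have "f (\<lambda>i. w $ i) \<le> f (\<lambda>i. v $ i) + K * (\<Sum>i\<in>UNIV. \<bar>v $ i - w $ i\<bar>)"
    using lip[of "\<lambda>i. w $ i" "\<lambda>i. v $ i"] by (simp add: abs_minus_commute)
  ultimately show "dist (f (\<lambda>i. v $ i)) (f (\<lambda>i. w $ i)) \<le> (K * CARD('i)) * dist v w"
    unfolding dist_real_def by (simp add: abs_le_iff mult_ac)
qed (use \<open>0 \<le> K\<close> in simp)

lemma lipschitz_coercive_attains_min:
  fixes f :: "('i::finite \<Rightarrow> real) \<Rightarrow> real"
  assumes lip: "\<And>l1 l2. f l1 \<le> f l2 + K * (\<Sum>i\<in>UNIV. \<bar>l1 i - l2 i\<bar>)" and "0 \<le> K"
    and coercive: "\<And>l. (\<forall>i. 0 \<le> l i) \<Longrightarrow> - C + \<epsilon> * (\<Sum>i\<in>UNIV. l i) \<le> f l" and "0 < \<epsilon>"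
  shows "\<exists>l. (\<forall>i. 0 \<le> l i) \<and> (\<forall>l'. (\<forall>i. 0 \<le> l' i) \<longrightarrow> f l \<le> f l')"
proof -
  define R where "R = (f (\<lambda>i. 0) + C) / \<epsilon>"
  have "0 \<le> R" using coercive[of "\<lambda>i. 0"] \<open>0 < \<epsilon>\<close> unfolding R_def by simp
  define \<phi> where "\<phi> v = f (\<lambda>i. v $ i)" for v :: "real ^ 'i"
  define S where "S = cbox (0::real ^ 'i) (\<chi> i. R)"
  have memS: "v \<in> S \<longleftrightarrow> (\<forall>i. 0 \<le> v $ i \<and> v $ i \<le> R)" for v
    unfolding S_def mem_box_cart by simp
  have "0 \<in> S" using memS \<open>0 \<le> R\<close> by simp
  then obtain v where vS: "v \<in> S" and vmin: "\<And>w. w \<in> S \<Longrightarrow> \<phi> v \<le> \<phi> w"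
    using continuous_attains_inf[of S \<phi>] continuous_on_lipschitz_sum_abs[OF lip \<open>0 \<le> K\<close>]
    unfolding S_def \<phi>_def by auto
  show ?thesis
  proof (intro exI[of _ "\<lambda>i. v $ i"] conjI allI impI)
    show "0 \<le> v $ i" for i using vS memS by auto
    fix l' :: "'i \<Rightarrow> real" assume l': "\<forall>i. 0 \<le> l' i"
    show "f (\<lambda>i. v $ i) \<le> f l'"
    proof (cases "\<forall>i. l' i \<le> R")
      case True
      then have "(\<chi> i. l' i) \<in> S" using l' memS by simp
      from vmin[OF this] show ?thesis unfolding \<phi>_def by (simp add: vec_lambda_inverse)
    next
      case False
      then obtain j where "R < l' j" by (auto simp: not_le)
      then have "f (\<lambda>i. 0) + C < \<epsilon> * l' j"
        using \<open>0 < \<epsilon>\<close> unfolding R_def by (simp add: pos_divide_less_eq mult.commute)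
      moreover have "\<epsilon> * l' j \<le> \<epsilon> * (\<Sum>i\<in>UNIV. l' i)"
        using \<open>0 < \<epsilon>\<close> l' by (intro mult_left_mono member_le_sum) auto
      moreover have "(($) (0::real ^ 'i)) = (\<lambda>i. 0)" by (rule ext) simp
      then have "\<phi> v \<le> f (\<lambda>i. 0)" using vmin[OF \<open>0 \<in> S\<close>] unfolding \<phi>_def by simp
      ultimately show ?thesis using coercive[OF l'] unfolding \<phi>_def by linarith
    qed
  qed
qed

section \<open>The measurable space of plans\<close>

definition plan_space :: "'a set \<Rightarrow> ('s list \<Rightarrow> 'a) measure" where
  "plan_space A = Pi\<^sub>M UNIV (\<lambda>_. count_space A)"

lemma space_plan_space: "space (plan_space A) = {a. \<forall>h. a h \<in> A}"
  by (auto simp: plan_space_def space_PiM PiE_UNIV_domain)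

lemma plan_in_space: "a \<in> space (plan_space A) \<Longrightarrow> plan_in A a"
  by (simp add: space_plan_space plan_in_def)

lemma measurable_plan_component: "(\<lambda>a. a h) \<in> measurable (plan_space A) (count_space A)"
  unfolding plan_space_def by (rule measurable_component_singleton) simp

lemma cylinder_in_plan_space:
  assumes "finite K"
  shows "{a \<in> space (plan_space A). \<forall>k\<in>K. a k = \<phi> k} \<in> sets (plan_space A)"
proof -
  have "{a \<in> space (plan_space A). a k = \<phi> k} \<in> sets (plan_space A)" for k
  proof -
    have "{a \<in> space (plan_space A). a k = \<phi> k} = (\<lambda>a. a k) -` (A \<inter> {\<phi> k}) \<inter> space (plan_space A)"
      by (auto simp: space_plan_space)
    also have "\<dots> \<in> sets (plan_space A)"
      by (rule measurable_sets[OF measurable_plan_component]) simp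
    finally show ?thesis .
  qed
  moreover have "{a \<in> space (plan_space A). \<forall>k\<in>K. a k = \<phi> k}
      = space (plan_space A) \<inter> (\<Inter>k\<in>K. {a \<in> space (plan_space A). a k = \<phi> k})"
    by auto
  ultimately show ?thesis
    using assms by (cases "K = {}") (simp_all add: sets.Int sets.finite_INT)
qed

text \<open>A function of a plan that only looks at finitely many histories is a finite linear
  combination of indicators of cylinder sets.\<close>
lemma borel_measurable_finitely_determined:
  fixes F :: "('s list \<Rightarrow> 'a) \<Rightarrow> real"
  assumes "finite A" "finite K"
    and dep: "\<And>a b. a \<in> space (plan_space A) \<Longrightarrow> b \<in> space (plan_space A) \<Longrightarrow>
                (\<And>k. k \<in> K \<Longrightarrow> a k = b k) \<Longrightarrow> F a = F b"
  shows "F \<in> borel_measurable (plan_space A)"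
proof -
  define \<Phi> where "\<Phi> = PiE K (\<lambda>_. A)"
  define E where "E \<phi> = {a \<in> space (plan_space A). \<forall>k\<in>K. a k = \<phi> k}" for \<phi>
  define sel where "sel \<phi> = (SOME b. b \<in> E \<phi>)" for \<phi>
  define G where "G a = (\<Sum>\<phi>\<in>\<Phi>. F (sel \<phi>) * indicator (E \<phi>) a)" for a
  have "finite \<Phi>" unfolding \<Phi>_def using assms by (simp add: finite_PiE)
  have G: "G \<in> borel_measurable (plan_space A)"
    unfolding G_def E_def
    by (intro borel_measurable_sum borel_measurable_times borel_measurable_const
          borel_measurable_indicator cylinder_in_plan_space \<open>finite K\<close>)
  have "F a = G a" if a: "a \<in> space (plan_space A)" for a
  proof -
    let ?\<phi> = "restrict a K"
    have "?\<phi> \<in> \<Phi>" using a by (auto simp: \<Phi>_def space_plan_space)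
    have aE: "a \<in> E ?\<phi>" using a by (simp add: E_def)
    have "a \<notin> E \<phi>" if "\<phi> \<in> \<Phi>" "\<phi> \<noteq> ?\<phi>" for \<phi>
      using that by (auto simp: E_def \<Phi>_def PiE_def extensional_def)
    then have "(\<Sum>\<phi>\<in>\<Phi> - {?\<phi>}. F (sel \<phi>) * indicator (E \<phi>) a) = 0"
      by (intro sum.neutral) auto
    then have "G a = F (sel ?\<phi>)"
      unfolding G_def sum.remove[OF \<open>finite \<Phi>\<close> \<open>?\<phi> \<in> \<Phi>\<close>] using aE by simp
    moreover have "sel ?\<phi> \<in> E ?\<phi>"
      unfolding sel_def using aE by (rule someI[where P="\<lambda>b. b \<in> E ?\<phi>"])
    then have "F (sel ?\<phi>) = F a"
      by (intro dep) (auto simp: E_def a)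
    ultimately show ?thesis by simp
  qed
  then show ?thesis using G by (simp cong: measurable_cong)
qed

lemma borel_measurable_along_history:
  fixes F :: "('s list \<Rightarrow> 'a) \<Rightarrow> real"
  assumes "finite A"
    and "\<And>a b. (\<And>k. k \<le> length h \<Longrightarrow> a (take k h) = b (take k h)) \<Longrightarrow> F a = F b"
  shows "F \<in> borel_measurable (plan_space A)"
proof (rule borel_measurable_finitely_determined[where K="(\<lambda>k. take k h) ` {..length h}"])
  fix a b :: "'s list \<Rightarrow> 'a" assume "\<And>k. k \<in> (\<lambda>k. take k h) ` {..length h} \<Longrightarrow> a k = b k"
  then show "F a = F b" by (intro assms(2)) auto
qed (use assms(1) in simp_all)

lemma shift_plan_measurable:
  assumes "sets P = sets (plan_space A)"
  shows "shift_plan s \<in> measurable P (plan_space A)"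
  unfolding plan_space_def
proof (rule measurable_PiM_single')
  show "(\<lambda>a. shift_plan s a h) \<in> measurable P (count_space A)" for h
    unfolding shift_plan_def measurable_cong_sets[OF assms refl]
    by (rule measurable_plan_component)
  show "shift_plan s \<in> space P \<rightarrow> (\<Pi>\<^sub>E i\<in>UNIV. space (count_space A))"
    using sets_eq_imp_space_eq[OF assms] by (auto simp: space_plan_space shift_plan_def)
qed

lemma first_action_ind_measurable:
  fixes A :: "'a set" and s :: 's
  assumes "finite A"
  shows "first_action_ind s a0 \<in> borel_measurable (plan_space A)"
proof (rule borel_measurable_along_history[OF assms, where h="[s]"])
  fix a b :: "'s list \<Rightarrow> 'a" assume "\<And>k. k \<le> length [s] \<Longrightarrow> a (take k [s]) = b (take k [s])"
  from this[of 1] show "first_action_ind s a0 a = first_action_ind s a0 b"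
    by (simp add: first_action_ind_def)
qed

lemma integrable_plan_function:
  fixes F :: "('s list \<Rightarrow> 'a) \<Rightarrow> real"
  assumes "finite_measure P" "sets P = sets (plan_space A)"
    and "F \<in> borel_measurable (plan_space A)" "\<And>a. plan_in A a \<Longrightarrow> \<bar>F a\<bar> \<le> B"
  shows "integrable P F"
proof -
  interpret finite_measure P by (rule assms(1))
  show ?thesis
  proof (rule integrable_const_bound[where B=B])
    show "AE x in P. norm (F x) \<le> B"
      using sets_eq_imp_space_eq[OF assms(2)] plan_in_space assms(4) by (intro AE_I2) auto
    show "F \<in> borel_measurable P"
      using assms(3) by (simp add: measurable_cong_sets[OF assms(2) refl])
  qed
qed

lemma integral_split_first_action:
  fixes F :: "('s list \<Rightarrow> 'a) \<Rightarrow> real"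
  assumes "finite A" "prob_space P" "sets P = sets (plan_space A)"
    and "F \<in> borel_measurable (plan_space A)" "\<And>a. plan_in A a \<Longrightarrow> \<bar>F a\<bar> \<le> B"
  shows "(\<integral>a. F a \<partial>P) = (\<Sum>a0\<in>A. \<integral>a. first_action_ind s a0 a * F a \<partial>P)"
proof -
  interpret prob_space P by fact
  have "F a = (\<Sum>a0\<in>A. first_action_ind s a0 a * F a)" if "a \<in> space P" for a
    using sum_first_action_ind[OF assms(1), where F="\<lambda>_. F a" and a=a and s=s]
      that sets_eq_imp_space_eq[OF assms(3)] by (simp add: space_plan_space)
  then have "(\<integral>a. F a \<partial>P) = (\<integral>a. (\<Sum>a0\<in>A. first_action_ind s a0 a * F a) \<partial>P)"
    by (rule Bochner_Integration.integral_cong[OF refl])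
  also have "\<dots> = (\<Sum>a0\<in>A. \<integral>a. first_action_ind s a0 a * F a \<partial>P)"
  proof (rule Bochner_Integration.integral_sum)
    fix a0
    show "integrable P (\<lambda>a. first_action_ind s a0 a * F a)"
    proof (rule integrable_plan_function[OF finite_measure_axioms assms(3)])
      show "(\<lambda>a. first_action_ind s a0 a * F a) \<in> borel_measurable (plan_space A)"
        by (intro borel_measurable_times first_action_ind_measurable[OF assms(1)] assms(4))
      show "\<bar>first_action_ind s a0 a * F a\<bar> \<le> B" if "plan_in A a" for a
        using assms(5)[OF that] abs_ge_zero[of "F a"] by (auto simp: first_action_ind_def)
    qed
  qed
  finally show ?thesis .
qed

lemma integral_first_action_ind_outside_Atil:
  assumes "lottery_feasible A p \<zeta> \<beta> \<pi> g gbar P x s" "a0 \<notin> Atil A p x s"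
  shows "(\<integral>a. first_action_ind s a0 a \<partial>P) = 0"
proof -
  have "AE a in P. a \<in> Atil_inf A p \<zeta> x" using assms(1) by (simp add: lottery_feasible_def)
  then have "AE a in P. first_action_ind s a0 a = 0"
    by eventually_elim (use assms(2) in \<open>auto simp: first_action_ind_def dest: Atil_inf_first_action\<close>)
  then show ?thesis by (rule integral_eq_zero_AE)
qed

section \<open>Bounded models\<close>

locale bounded_model =
  fixes \<pi> :: "'s::finite \<Rightarrow> 's \<Rightarrow> real"
    and A :: "'a set"
    and X :: "'x set"
    and \<zeta> :: "'x \<Rightarrow> 'a \<Rightarrow> 's \<Rightarrow> 'x"
    and p r :: "'x \<Rightarrow> 'a \<Rightarrow> 's \<Rightarrow> real"
    and g :: "'i::finite \<Rightarrow> 'x \<Rightarrow> 'a \<Rightarrow> 's \<Rightarrow> real"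
    and gbar :: "'i \<Rightarrow> real"
    and \<beta> :: real
    and Br Bg :: real
  assumes pi_nonneg: "\<And>s s'. 0 \<le> \<pi> s s'"
    and pi_stoch: "\<And>s. (\<Sum>s'\<in>UNIV. \<pi> s s') = 1"
    and A_fin: "finite A"
    and \<zeta>_in_X: "\<And>x a s. x \<in> X \<Longrightarrow> a \<in> A \<Longrightarrow> \<zeta> x a s \<in> X"
    and r_bound: "\<And>x a s. x \<in> X \<Longrightarrow> a \<in> A \<Longrightarrow> \<bar>r x a s\<bar> \<le> Br"
    and g_bound: "\<And>i x a s. x \<in> X \<Longrightarrow> a \<in> A \<Longrightarrow> \<bar>g i x a s\<bar> \<le> Bg"
    and Br_nonneg: "0 \<le> Br" and Bg_nonneg: "0 \<le> Bg"
    and \<beta>_pos: "0 < \<beta>" and \<beta>_less_1: "\<beta> < 1"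
begin

abbreviation disc :: "('x \<Rightarrow> 'a \<Rightarrow> 's \<Rightarrow> real) \<Rightarrow> ('s list \<Rightarrow> 'a) \<Rightarrow> 'x \<Rightarrow> 's list \<Rightarrow> real" where
  "disc f a x0 h \<equiv> disc_cont f \<zeta> \<beta> \<pi> a x0 h"

definition bounded_on :: "('x \<Rightarrow> 'a \<Rightarrow> 's \<Rightarrow> real) \<Rightarrow> real \<Rightarrow> bool" where
  "bounded_on f B \<longleftrightarrow> (\<forall>x\<in>X. \<forall>a\<in>A. \<forall>s. \<bar>f x a s\<bar> \<le> B)"

lemma bounded_on_r: "bounded_on r Br"
  by (simp add: bounded_on_def r_bound)

lemma bounded_on_g: "bounded_on (g i) Bg"
  by (simp add: bounded_on_def g_bound)

lemma xk_in_X: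
  assumes "x0 \<in> X" "plan_in A a" "k \<le> length h" "h \<noteq> [] \<or> k = 0"
  shows "xk \<zeta> a x0 h k \<in> X"
  using assms(3,4)
proof (induction k)
  case (Suc k)
  then have "a (take (Suc k) h) \<in> A" using assms(2) by (auto simp: plan_in_def)
  then show ?case using Suc by (simp add: \<zeta>_in_X)
qed (simp add: assms(1))

lemma xof_in_X: "x0 \<in> X \<Longrightarrow> plan_in A a \<Longrightarrow> xof \<zeta> a x0 h \<in> X"
  unfolding xof_def by (cases "h = []") (auto intro: xk_in_X)

lemma abs_payoff_le:
  assumes "bounded_on f B" "x0 \<in> X" "plan_in A a" "h \<noteq> []"
  shows "\<bar>payoff f \<zeta> a x0 h\<bar> \<le> B"
  using assms xof_in_X[OF assms(2,3)] unfolding payoff_def plan_in_def bounded_on_def by blast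

lemma abs_disc_term_le:
  assumes "bounded_on f B" "x0 \<in> X" "plan_in A a" "h \<noteq> []"
  shows "\<bar>\<beta> ^ n * cont_exp \<pi> h n (payoff f \<zeta> a x0)\<bar> \<le> \<beta> ^ n * B"
proof -
  have "\<bar>cont_exp \<pi> h n (payoff f \<zeta> a x0)\<bar> \<le> B"
    by (rule abs_cont_exp_le[OF pi_nonneg pi_stoch]) (use assms in \<open>auto intro!: abs_payoff_le\<close>)
  then show ?thesis using \<beta>_pos by (simp add: abs_mult mult_left_mono)
qed

lemma summable_disc_terms:
  assumes "bounded_on f B" "x0 \<in> X" "plan_in A a" "h \<noteq> []"
  shows "summable (\<lambda>n. \<bar>\<beta> ^ n * cont_exp \<pi> h n (payoff f \<zeta> a x0)\<bar>)"
  by (rule summable_comparison_test'[where g="\<lambda>n. \<beta> ^ n * B"])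
     (use \<beta>_pos \<beta>_less_1 abs_disc_term_le[OF assms] in \<open>auto simp: summable_mult2\<close>)

lemma summable_disc:
  assumes "bounded_on f B" "x0 \<in> X" "plan_in A a" "h \<noteq> []"
  shows "summable (\<lambda>n. \<beta> ^ n * cont_exp \<pi> h n (payoff f \<zeta> a x0))"
  using summable_disc_terms[OF assms] by (rule summable_rabs_cancel)

lemma abs_disc_le:
  assumes "bounded_on f B" "x0 \<in> X" "plan_in A a" "h \<noteq> []"
  shows "\<bar>disc f a x0 h\<bar> \<le> B / (1 - \<beta>)"
proof -
  have geom: "summable (\<lambda>n. \<beta> ^ n * B)" using \<beta>_pos \<beta>_less_1 by (simp add: summable_mult2)
  have "\<bar>disc f a x0 h\<bar> \<le> (\<Sum>n. \<bar>\<beta> ^ n * cont_exp \<pi> h n (payoff f \<zeta> a x0)\<bar>)"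
    unfolding disc_cont_def by (rule summable_rabs[OF summable_disc_terms[OF assms]])
  also have "\<dots> \<le> (\<Sum>n. \<beta> ^ n * B)"
    by (rule suminf_le[OF _ summable_disc_terms[OF assms] geom]) (use abs_disc_term_le[OF assms] in auto)
  also have "\<dots> = B / (1 - \<beta>)"
    using \<beta>_pos \<beta>_less_1 by (simp add: suminf_mult2[symmetric] suminf_geometric)
  finally show ?thesis .
qed

lemma disc_unfold:
  assumes "bounded_on f B" "x0 \<in> X" "plan_in A a" "h \<noteq> []"
  shows "disc f a x0 h = payoff f \<zeta> a x0 h + \<beta> * (\<Sum>s'\<in>UNIV. \<pi> (last h) s' * disc f a x0 (h @ [s']))"
proof -
  let ?T = "\<lambda>h n. \<beta> ^ n * cont_exp \<pi> h n (payoff f \<zeta> a x0)"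
  have S: "summable (?T h')" if "h' \<noteq> []" for h' by (rule summable_disc[OF assms(1-3) that])
  have "disc f a x0 h = ?T h 0 + (\<Sum>n. ?T h (Suc n))"
    unfolding disc_cont_def suminf_split_head[OF S[OF assms(4)]] by simp
  also have "(\<Sum>n. ?T h (Suc n)) = (\<Sum>n. \<beta> * (\<Sum>s'\<in>UNIV. \<pi> (last h) s' * ?T (h @ [s']) n))"
    by (simp add: cont_exp_Suc sum_distrib_left mult_ac)
  also have "\<dots> = \<beta> * (\<Sum>n. \<Sum>s'\<in>UNIV. \<pi> (last h) s' * ?T (h @ [s']) n)"
    by (rule suminf_mult) (auto intro!: summable_sum summable_mult S)
  also have "(\<Sum>n. \<Sum>s'\<in>UNIV. \<pi> (last h) s' * ?T (h @ [s']) n)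
      = (\<Sum>s'\<in>UNIV. \<Sum>n. \<pi> (last h) s' * ?T (h @ [s']) n)"
    by (rule suminf_sum) (auto intro!: summable_mult S)
  also have "\<dots> = (\<Sum>s'\<in>UNIV. \<pi> (last h) s' * disc f a x0 (h @ [s']))"
    unfolding disc_cont_def by (intro sum.cong refl suminf_mult S) auto
  finally show ?thesis by simp
qed

lemma disc_measurable: "(\<lambda>a. disc f a x0 h) \<in> borel_measurable (plan_space A)"
  unfolding disc_cont_def cont_exp_def
  by (intro borel_measurable_suminf borel_measurable_times borel_measurable_const
        borel_measurable_sum borel_measurable_along_history[OF A_fin] payoff_cong)

definition disc_bound_g :: real where
  "disc_bound_g = Bg / (1 - \<beta>)"

definition slack_bound :: real where
  "slack_bound = disc_bound_g + (\<Sum>i\<in>UNIV. \<bar>gbar i\<bar>)"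

definition value_bound :: "('i \<Rightarrow> real) \<Rightarrow> real" where
  "value_bound \<gamma> = Br / (1 - \<beta>) + (\<Sum>i\<in>UNIV. \<bar>\<gamma> i\<bar> * disc_bound_g)"

lemma disc_bound_g_nonneg: "0 \<le> disc_bound_g"
  using Bg_nonneg \<beta>_less_1 by (simp add: disc_bound_g_def)

lemma slack_bound_nonneg: "0 \<le> slack_bound"
  using disc_bound_g_nonneg by (simp add: slack_bound_def sum_nonneg)

lemma abs_disc_g_le: "x0 \<in> X \<Longrightarrow> plan_in A a \<Longrightarrow> h \<noteq> [] \<Longrightarrow> \<bar>disc (g i) a x0 h\<bar> \<le> disc_bound_g"
  unfolding disc_bound_g_def by (rule abs_disc_le[OF bounded_on_g])

lemma abs_slack_le:
  assumes "x0 \<in> X" "plan_in A a" "h \<noteq> []"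
  shows "\<bar>disc (g i) a x0 h - gbar i\<bar> \<le> slack_bound"
proof -
  have "\<bar>gbar i\<bar> \<le> (\<Sum>i\<in>UNIV. \<bar>gbar i\<bar>)" by (rule member_le_sum) auto
  then show ?thesis using abs_disc_g_le[OF assms, of i] unfolding slack_bound_def by linarith
qed

definition plan_value :: "('i \<Rightarrow> real) \<Rightarrow> ('s list \<Rightarrow> 'a) \<Rightarrow> 'x \<Rightarrow> 's \<Rightarrow> real" where
  "plan_value \<gamma> a x0 s0 = disc r a x0 [s0] + (\<Sum>i\<in>UNIV. \<gamma> i * disc (g i) a x0 [s0])"

lemma abs_plan_value_le:
  assumes "x0 \<in> X" "plan_in A a"
  shows "\<bar>plan_value \<gamma> a x0 s0\<bar> \<le> value_bound \<gamma>"
proof -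
  have "\<bar>disc r a x0 [s0]\<bar> \<le> Br / (1 - \<beta>)" by (rule abs_disc_le[OF bounded_on_r assms]) simp
  moreover have "\<bar>\<Sum>i\<in>UNIV. \<gamma> i * disc (g i) a x0 [s0]\<bar> \<le> (\<Sum>i\<in>UNIV. \<bar>\<gamma> i\<bar> * disc_bound_g)"
    by (rule order.trans[OF sum_abs sum_mono])
       (auto simp: abs_mult intro!: mult_left_mono abs_disc_g_le[OF assms])
  ultimately show ?thesis unfolding plan_value_def value_bound_def by linarith
qed

lemma plan_value_measurable: "(\<lambda>a. plan_value \<gamma> a x0 s0) \<in> borel_measurable (plan_space A)"
  unfolding plan_value_def
  by (intro borel_measurable_add borel_measurable_sum borel_measurable_times
        borel_measurable_const disc_measurable)

lemma plan_value_add: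
  "plan_value (\<lambda>i. \<gamma> i + lam i) a x0 s0 = plan_value \<gamma> a x0 s0 + (\<Sum>i\<in>UNIV. lam i * disc (g i) a x0 [s0])"
  by (simp add: plan_value_def distrib_right sum.distrib)

definition stage_payoff :: "('i \<Rightarrow> real) \<Rightarrow> ('i \<Rightarrow> real) \<Rightarrow> 'x \<Rightarrow> 's \<Rightarrow> 'a \<Rightarrow> real" where
  "stage_payoff \<gamma> lam x s a0 = r x a0 s + (\<Sum>i\<in>UNIV. \<gamma> i * g i x a0 s + lam i * (g i x a0 s - gbar i))"

lemma plan_value_unfold:
  assumes x: "x \<in> X" and a: "plan_in A a"
  shows "plan_value (\<lambda>i. \<gamma> i + lam i) a x s
    = stage_payoff \<gamma> lam x s (a [s]) + (\<Sum>i\<in>UNIV. lam i * gbar i)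
      + \<beta> * (\<Sum>s'\<in>UNIV. \<pi> s s' * plan_value (\<lambda>i. \<gamma> i + lam i) (shift_plan s a) (\<zeta> x (a [s]) s) s')"
proof -
  let ?a' = "shift_plan s a" and ?x' = "\<zeta> x (a [s]) s"
  have unfold: "disc f a x [s] = f x (a [s]) s + \<beta> * (\<Sum>s'\<in>UNIV. \<pi> s s' * disc f ?a' ?x' [s'])"
    if "bounded_on f B" for f B
    using disc_unfold[OF that x a, of "[s]"] by (simp add: payoff_def xof_def disc_cont_shift_plan)
  have swap: "(\<Sum>s'\<in>UNIV. \<pi> s s' * (\<Sum>i\<in>UNIV. c i * disc (g i) ?a' ?x' [s']))
      = (\<Sum>i\<in>UNIV. c i * (\<Sum>s'\<in>UNIV. \<pi> s s' * disc (g i) ?a' ?x' [s']))" for c :: "'i \<Rightarrow> real"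
    unfolding sum_distrib_left by (subst sum.swap) (simp add: mult_ac)
  show ?thesis
    unfolding plan_value_def stage_payoff_def unfold[OF bounded_on_r] unfold[OF bounded_on_g]
      distrib_left sum.distrib swap
    by (simp add: algebra_simps sum.distrib sum_distrib_left sum_subtractf)
qed

definition action_lists :: "nat \<Rightarrow> 'a list set" where
  "action_lists t = {ah. length ah = t \<and> set ah \<subseteq> A}"

lemma finite_action_lists: "finite (action_lists t)"
  unfolding action_lists_def using finite_lists_length_eq[OF A_fin, of t] by (simp add: conj_commute)

lemma act_hist_in_action_lists:
  assumes "plan_in A a" "sh \<in> hists s0 t"
  shows "act_hist a sh \<in> action_lists t"
proof -
  have "sh \<noteq> []" using assms(2) by (auto simp: hists_def)
  then have "a (take (Suc k) sh) \<in> A" for k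
    using assms(1) unfolding plan_in_def by (metis take_eq_Nil nat.distinct(1))
  then show ?thesis using assms(2) by (auto simp: action_lists_def act_hist_def hists_def)
qed

definition multiplier_mass :: "('i \<Rightarrow> 's list \<times> 'a list \<Rightarrow> real) \<Rightarrow> 's \<Rightarrow> nat \<Rightarrow> real" where
  "multiplier_mass lam s0 t =
     (\<Sum>sh\<in>hists s0 t. \<Sum>ah\<in>action_lists t. \<Sum>i\<in>UNIV. lam i (sh, ah) * path_prob \<pi> sh)"

definition multiplier_term ::
    "('i \<Rightarrow> 's list \<times> 'a list \<Rightarrow> real) \<Rightarrow> ('s list \<Rightarrow> 'a) \<Rightarrow> 'x \<Rightarrow> 's \<Rightarrow> nat \<Rightarrow> real" where
  "multiplier_term lam a x0 s0 t = (\<Sum>sh\<in>hists s0 t. path_prob \<pi> sh *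
      (\<Sum>i\<in>UNIV. lam i (sh, act_hist a sh) * (disc (g i) a x0 sh - gbar i)))"

lemma Lam_nonneg: "lam \<in> Lam A \<beta> \<pi> s0 \<Longrightarrow> 0 \<le> lam i h"
  unfolding Lam_def by (cases h) auto

lemma summable_multiplier_mass: "lam \<in> Lam A \<beta> \<pi> s0 \<Longrightarrow> summable (\<lambda>t. \<beta> ^ t * multiplier_mass lam s0 t)"
  unfolding Lam_def multiplier_mass_def action_lists_def by auto

lemma abs_multiplier_term_le:
  assumes lam: "lam \<in> Lam A \<beta> \<pi> s0" and x0: "x0 \<in> X" and a: "plan_in A a"
  shows "\<bar>multiplier_term lam a x0 s0 t\<bar> \<le> slack_bound * multiplier_mass lam s0 t"
proof -
  have "\<bar>\<Sum>i\<in>UNIV. lam i (sh, act_hist a sh) * (disc (g i) a x0 sh - gbar i)\<bar>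
      \<le> slack_bound * (\<Sum>ah\<in>action_lists t. \<Sum>i\<in>UNIV. lam i (sh, ah))"
    if sh: "sh \<in> hists s0 t" for sh
  proof -
    have "sh \<noteq> []" using sh by (auto simp: hists_def)
    have "\<bar>\<Sum>i\<in>UNIV. lam i (sh, act_hist a sh) * (disc (g i) a x0 sh - gbar i)\<bar>
        \<le> (\<Sum>i\<in>UNIV. lam i (sh, act_hist a sh) * slack_bound)"
      by (rule order.trans[OF sum_abs sum_mono])
         (auto simp: abs_mult Lam_nonneg[OF lam] intro!: mult_left_mono abs_slack_le[OF x0 a \<open>sh \<noteq> []\<close>])
    also have "\<dots> = slack_bound * (\<Sum>i\<in>UNIV. lam i (sh, act_hist a sh))"
      by (simp add: sum_distrib_left mult.commute)
    also have "\<dots> \<le> slack_bound * (\<Sum>ah\<in>action_lists t. \<Sum>i\<in>UNIV. lam i (sh, ah))"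
      by (intro mult_left_mono slack_bound_nonneg member_le_sum[where f="\<lambda>ah. \<Sum>i\<in>UNIV. lam i (sh, ah)"])
         (auto intro!: sum_nonneg Lam_nonneg[OF lam] act_hist_in_action_lists[OF a sh] finite_action_lists)
    finally show ?thesis .
  qed
  then have "\<bar>multiplier_term lam a x0 s0 t\<bar>
      \<le> (\<Sum>sh\<in>hists s0 t. path_prob \<pi> sh * (slack_bound * (\<Sum>ah\<in>action_lists t. \<Sum>i\<in>UNIV. lam i (sh, ah))))"
    unfolding multiplier_term_def
    by (intro order.trans[OF sum_abs sum_mono])
       (auto simp: abs_mult path_prob_nonneg[OF pi_nonneg] intro: mult_left_mono)
  also have "\<dots> = slack_bound * multiplier_mass lam s0 t"
    unfolding multiplier_mass_def by (simp add: sum_distrib_left sum_distrib_right mult_ac)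
  finally show ?thesis .
qed

lemma abs_multiplier_series_le:
  assumes "lam \<in> Lam A \<beta> \<pi> s0" "x0 \<in> X" "plan_in A a"
  shows "\<bar>\<beta> ^ t * multiplier_term lam a x0 s0 t\<bar> \<le> slack_bound * (\<beta> ^ t * multiplier_mass lam s0 t)"
  using abs_multiplier_term_le[OF assms, of t] \<beta>_pos by (simp add: abs_mult mult_left_mono mult_ac)

lemma summable_multiplier_series:
  assumes "lam \<in> Lam A \<beta> \<pi> s0" "x0 \<in> X" "plan_in A a"
  shows "summable (\<lambda>t. \<bar>\<beta> ^ t * multiplier_term lam a x0 s0 t\<bar>)"
  by (rule summable_comparison_test'[OF summable_mult[OF summable_multiplier_mass[OF assms(1)]]])
     (use abs_multiplier_series_le[OF assms] in auto)

lemma suminf_multiplier_series_le: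
  assumes "lam \<in> Lam A \<beta> \<pi> s0" "x0 \<in> X" "plan_in A a"
  shows "(\<Sum>t. \<beta> ^ t * multiplier_term lam a x0 s0 t) \<le> slack_bound * (\<Sum>t. \<beta> ^ t * multiplier_mass lam s0 t)"
proof -
  have "(\<Sum>t. \<beta> ^ t * multiplier_term lam a x0 s0 t) \<le> (\<Sum>t. \<bar>\<beta> ^ t * multiplier_term lam a x0 s0 t\<bar>)"
    using summable_multiplier_series[OF assms] summable_rabs_cancel
    by (intro suminf_le) auto
  also have "\<dots> \<le> (\<Sum>t. slack_bound * (\<beta> ^ t * multiplier_mass lam s0 t))"
    by (intro suminf_le abs_multiplier_series_le[OF assms] summable_multiplier_series[OF assms]
          summable_mult summable_multiplier_mass[OF assms(1)])
  finally show ?thesis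
    by (simp add: suminf_mult summable_multiplier_mass[OF assms(1)])
qed

lemma Lag_eq:
  assumes lam: "lam \<in> Lam A \<beta> \<pi> s0" and x0: "x0 \<in> X" and a: "plan_in A a"
  shows "Lag r g gbar \<zeta> \<beta> \<pi> \<gamma> a lam x0 s0 = plan_value \<gamma> a x0 s0 + (\<Sum>t. \<beta> ^ t * multiplier_term lam a x0 s0 t)"
proof -
  let ?R = "\<lambda>t. \<beta> ^ t * cont_exp \<pi> [s0] t (payoff r \<zeta> a x0)"
  let ?G = "\<lambda>i t. \<beta> ^ t * cont_exp \<pi> [s0] t (payoff (g i) \<zeta> a x0)"
  let ?C = "\<lambda>t. \<beta> ^ t * multiplier_term lam a x0 s0 t"
  have swap: "(\<Sum>sh\<in>hists s0 t. path_prob \<pi> sh * (\<Sum>i\<in>UNIV. \<gamma> i * payoff (g i) \<zeta> a x0 sh))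
      = (\<Sum>i\<in>UNIV. \<gamma> i * (\<Sum>sh\<in>hists s0 t. path_prob \<pi> sh * payoff (g i) \<zeta> a x0 sh))" for t
    by (simp add: sum_distrib_left mult_ac sum.swap[of _ "hists s0 t"])
  have summand: "\<beta> ^ t * (\<Sum>sh\<in>hists s0 t. path_prob \<pi> sh *
        (payoff r \<zeta> a x0 sh + (\<Sum>i\<in>UNIV. \<gamma> i * payoff (g i) \<zeta> a x0 sh)
         + (\<Sum>i\<in>UNIV. lam i (sh, act_hist a sh) * (disc (g i) a x0 sh - gbar i))))
      = ?R t + (\<Sum>i\<in>UNIV. \<gamma> i * ?G i t) + ?C t" for t
    unfolding cont_exp_singleton multiplier_term_def distrib_left sum.distrib swap
    by (simp add: sum_distrib_left mult_ac)
  have sR: "summable ?R" using summable_disc[OF bounded_on_r x0 a, of "[s0]"] by simp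
  have sG: "summable (?G i)" for i using summable_disc[OF bounded_on_g x0 a, of "[s0]"] by simp
  have sC: "summable ?C" using summable_multiplier_series[OF assms] by (rule summable_rabs_cancel)
  have "Lag r g gbar \<zeta> \<beta> \<pi> \<gamma> a lam x0 s0 = (\<Sum>t. ?R t + (\<Sum>i\<in>UNIV. \<gamma> i * ?G i t) + ?C t)"
    unfolding Lag_def summand ..
  also have "\<dots> = (\<Sum>t. ?R t) + (\<Sum>t. \<Sum>i\<in>UNIV. \<gamma> i * ?G i t) + (\<Sum>t. ?C t)"
    by (simp add: suminf_add[symmetric] sR sG sC summable_add summable_sum summable_mult)
  also have "(\<Sum>t. \<Sum>i\<in>UNIV. \<gamma> i * ?G i t) = (\<Sum>i\<in>UNIV. \<gamma> i * (\<Sum>t. ?G i t))"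
    by (subst suminf_sum) (auto intro!: summable_mult sG suminf_mult sum.cong)
  finally show ?thesis unfolding plan_value_def disc_cont_def by simp
qed

lemma multiplier_term_measurable: "(\<lambda>a. multiplier_term lam a x0 s0 t) \<in> borel_measurable (plan_space A)"
  unfolding multiplier_term_def
  by (intro borel_measurable_sum borel_measurable_times borel_measurable_const borel_measurable_diff
        disc_measurable borel_measurable_along_history[OF A_fin] act_hist_cong[THEN arg_cong])

lemma Lag_le:
  assumes "lam \<in> Lam A \<beta> \<pi> s0" "x0 \<in> X" "plan_in A a"
  shows "Lag r g gbar \<zeta> \<beta> \<pi> \<gamma> a lam x0 s0
    \<le> value_bound \<gamma> + slack_bound * (\<Sum>t. \<beta> ^ t * multiplier_mass lam s0 t)"
  using Lag_eq[OF assms, where \<gamma>=\<gamma>] abs_plan_value_le[OF assms(2,3), of \<gamma> s0] suminf_multiplier_series_le[OF assms]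
  by linarith

lemma Lag_gamma_le:
  assumes "lam \<in> Lam A \<beta> \<pi> s0" "x0 \<in> X" "plan_in A a"
  shows "Lag r g gbar \<zeta> \<beta> \<pi> \<gamma>1 a lam x0 s0
    \<le> Lag r g gbar \<zeta> \<beta> \<pi> \<gamma>2 a lam x0 s0 + (\<Sum>i\<in>UNIV. \<bar>\<gamma>1 i - \<gamma>2 i\<bar>) * disc_bound_g"
proof -
  have "(\<gamma>1 i - \<gamma>2 i) * disc (g i) a x0 [s0] \<le> \<bar>\<gamma>1 i - \<gamma>2 i\<bar> * disc_bound_g" for i
  proof -
    have "(\<gamma>1 i - \<gamma>2 i) * disc (g i) a x0 [s0] \<le> \<bar>\<gamma>1 i - \<gamma>2 i\<bar> * \<bar>disc (g i) a x0 [s0]\<bar>"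
      by (metis abs_ge_self abs_mult)
    also have "\<dots> \<le> \<bar>\<gamma>1 i - \<gamma>2 i\<bar> * disc_bound_g"
      by (intro mult_left_mono abs_disc_g_le[OF assms(2,3)]) simp_all
    finally show ?thesis .
  qed
  then have "(\<Sum>i\<in>UNIV. (\<gamma>1 i - \<gamma>2 i) * disc (g i) a x0 [s0]) \<le> (\<Sum>i\<in>UNIV. \<bar>\<gamma>1 i - \<gamma>2 i\<bar> * disc_bound_g)"
    by (rule sum_mono)
  then show ?thesis
    unfolding Lag_eq[OF assms] plan_value_def
    by (simp add: sum_distrib_right left_diff_distrib sum_subtractf)
qed

lemma SUP_Lag_finite:
  assumes "Atil_inf A p \<zeta> x0 \<noteq> {}" "lam \<in> Lam A \<beta> \<pi> s0" "x0 \<in> X"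
  shows "\<exists>S. (SUP a\<in>Atil_inf A p \<zeta> x0. ereal (Lag r g gbar \<zeta> \<beta> \<pi> \<gamma> a lam x0 s0)) = ereal S"
proof -
  let ?S = "SUP a\<in>Atil_inf A p \<zeta> x0. ereal (Lag r g gbar \<zeta> \<beta> \<pi> \<gamma> a lam x0 s0)"
  obtain a where "a \<in> Atil_inf A p \<zeta> x0" using assms(1) by auto
  then have "ereal (Lag r g gbar \<zeta> \<beta> \<pi> \<gamma> a lam x0 s0) \<le> ?S" by (rule SUP_upper)
  moreover have "?S \<le> ereal (value_bound \<gamma> + slack_bound * (\<Sum>t. \<beta> ^ t * multiplier_mass lam s0 t))"
    by (rule SUP_least) (auto intro!: Lag_le[OF assms(2,3)] Atil_inf_plan_in)
  ultimately show ?thesis by (cases ?S) auto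
qed

lemma zero_in_Lam: "(\<lambda>i h. 0) \<in> Lam A \<beta> \<pi> s0"
  unfolding Lam_def by simp

lemma Dval_le_value_bound:
  assumes "x0 \<in> X"
  shows "Dval A p r g gbar \<zeta> \<beta> \<pi> \<gamma> x0 s0 \<le> ereal (value_bound \<gamma>)"
proof -
  have "Dval A p r g gbar \<zeta> \<beta> \<pi> \<gamma> x0 s0
      \<le> (SUP a\<in>Atil_inf A p \<zeta> x0. ereal (Lag r g gbar \<zeta> \<beta> \<pi> \<gamma> a (\<lambda>i h. 0) x0 s0))"
    unfolding Dval_def by (rule INF_lower[OF zero_in_Lam])
  also have "\<dots> \<le> ereal (value_bound \<gamma>)"
  proof (rule SUP_least)
    fix a assume "a \<in> Atil_inf A p \<zeta> x0"
    then have a: "plan_in A a" by (rule Atil_inf_plan_in)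
    have "Lag r g gbar \<zeta> \<beta> \<pi> \<gamma> a (\<lambda>i h. 0) x0 s0 = plan_value \<gamma> a x0 s0"
      by (simp add: Lag_eq[OF zero_in_Lam assms a] multiplier_term_def)
    then show "ereal (Lag r g gbar \<zeta> \<beta> \<pi> \<gamma> a (\<lambda>i h. 0) x0 s0) \<le> ereal (value_bound \<gamma>)"
      using abs_plan_value_le[OF assms a, of \<gamma> s0] by simp
  qed
  finally show ?thesis .
qed

end

section \<open>Weak duality for lotteries\<close>

text \<open>The lottery is the image of M under T, reweighted by w; the weights make it possible
  to condition a lottery on its first action.\<close>
locale weighted_lottery = bounded_model \<pi> A X \<zeta> p r g gbar \<beta> Br Bg + M: finite_measure M
  for \<pi> :: "'s::finite \<Rightarrow> 's \<Rightarrow> real" and A :: "'a set" and X :: "'x set"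
    and \<zeta> :: "'x \<Rightarrow> 'a \<Rightarrow> 's \<Rightarrow> 'x" and p r :: "'x \<Rightarrow> 'a \<Rightarrow> 's \<Rightarrow> real"
    and g :: "'i::finite \<Rightarrow> 'x \<Rightarrow> 'a \<Rightarrow> 's \<Rightarrow> real" and gbar :: "'i \<Rightarrow> real"
    and \<beta> Br Bg :: real and M :: "'m measure" +
  fixes T :: "'m \<Rightarrow> 's list \<Rightarrow> 'a" and w :: "'m \<Rightarrow> real" and x0 :: 'x and s0 :: 's
  assumes T_measurable: "T \<in> measurable M (plan_space A)"
    and w_measurable: "w \<in> borel_measurable M"
    and w_range: "\<And>x. x \<in> space M \<Longrightarrow> 0 \<le> w x \<and> w x \<le> 1"
    and x0_in_X: "x0 \<in> X"
    and Atil_inf_nonempty: "Atil_inf A p \<zeta> x0 \<noteq> {}"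
    and feasible: "AE x in M. w x \<noteq> 0 \<longrightarrow> T x \<in> Atil_inf A p \<zeta> x0"
    and constraints: "\<And>t sh ah i. sh \<in> hists s0 t \<Longrightarrow> length ah = t \<Longrightarrow> set ah \<subseteq> A \<Longrightarrow>
       0 \<le> (\<integral>x. w x * ((if act_hist (T x) sh = ah then 1 else 0) * (disc (g i) (T x) x0 sh - gbar i)) \<partial>M)"
begin

lemma plan_in_T: "x \<in> space M \<Longrightarrow> plan_in A (T x)"
  using measurable_space[OF T_measurable] plan_in_space by blast

lemma integrable_weighted:
  assumes "F \<in> borel_measurable (plan_space A)" "\<And>a. plan_in A a \<Longrightarrow> \<bar>F a\<bar> \<le> B"
  shows "integrable M (\<lambda>x. w x * F (T x))"
proof (rule M.integrable_const_bound[where B=B])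
  show "AE x in M. norm (w x * F (T x)) \<le> B"
  proof (rule AE_I2)
    fix x assume x: "x \<in> space M"
    have "\<bar>w x\<bar> * \<bar>F (T x)\<bar> \<le> 1 * B"
      using w_range[OF x] assms(2)[OF plan_in_T[OF x]] by (intro mult_mono) auto
    then show "norm (w x * F (T x)) \<le> B" by (simp add: abs_mult)
  qed
  show "(\<lambda>x. w x * F (T x)) \<in> borel_measurable M"
    by (intro borel_measurable_times w_measurable measurable_compose[OF T_measurable assms(1)])
qed

lemma integral_weighted_multiplier_term_nonneg:
  assumes lam: "lam \<in> Lam A \<beta> \<pi> s0"
  shows "0 \<le> (\<integral>x. w x * multiplier_term lam (T x) x0 s0 t \<partial>M)"
proof -
  define Y where "Y i sh ah a = (if act_hist a sh = ah then 1 else 0) * (disc (g i) a x0 sh - gbar i)"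
    for i sh ah a
  have Y_int: "integrable M (\<lambda>x. w x * Y i sh ah (T x))" if "sh \<in> hists s0 t" for i sh ah
  proof (rule integrable_weighted[where B=slack_bound])
    show "Y i sh ah \<in> borel_measurable (plan_space A)"
      unfolding Y_def
      by (intro borel_measurable_times borel_measurable_diff borel_measurable_const disc_measurable
            borel_measurable_along_history[OF A_fin] act_hist_cong[THEN arg_cong])
    have "sh \<noteq> []" using that by (auto simp: hists_def)
    then show "\<bar>Y i sh ah a\<bar> \<le> slack_bound" if "plan_in A a" for a
      using abs_slack_le[OF x0_in_X that] slack_bound_nonneg by (simp add: Y_def)
  qed
  have "w x * multiplier_term lam (T x) x0 s0 t = (\<Sum>sh\<in>hists s0 t. \<Sum>i\<in>UNIV. \<Sum>ah\<in>action_lists t.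
          (path_prob \<pi> sh * lam i (sh, ah)) * (w x * Y i sh ah (T x)))" if x: "x \<in> space M" for x
  proof -
    have "(\<Sum>ah\<in>action_lists t. (path_prob \<pi> sh * lam i (sh, ah)) * (w x * Y i sh ah (T x)))
        = path_prob \<pi> sh * (w x * (lam i (sh, act_hist (T x) sh) * (disc (g i) (T x) x0 sh - gbar i)))"
      if sh: "sh \<in> hists s0 t" for sh i
      using act_hist_in_action_lists[OF plan_in_T[OF x] sh] finite_action_lists
      by (simp add: Y_def sum.delta if_distrib[of "\<lambda>c. _ * (w x * (c * _))"] cong: if_cong)
    then show ?thesis
      unfolding multiplier_term_def by (simp add: sum_distrib_left mult_ac)
  qed
  then have "(\<integral>x. w x * multiplier_term lam (T x) x0 s0 t \<partial>M) = (\<Sum>sh\<in>hists s0 t. \<Sum>i\<in>UNIV.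
      \<Sum>ah\<in>action_lists t. (path_prob \<pi> sh * lam i (sh, ah)) * (\<integral>x. w x * Y i sh ah (T x) \<partial>M))"
    by (simp add: Y_int integrable_sum integral_sum cong: Bochner_Integration.integral_cong)
  also have "\<dots> \<ge> 0"
    by (intro sum_nonneg mult_nonneg_nonneg path_prob_nonneg pi_nonneg Lam_nonneg[OF lam])
       (auto simp: Y_def action_lists_def intro!: constraints)
  finally show ?thesis .
qed

lemma weighted_multiplier_series:
  assumes lam: "lam \<in> Lam A \<beta> \<pi> s0"
  shows "integrable M (\<lambda>x. \<Sum>t. w x * (\<beta> ^ t * multiplier_term lam (T x) x0 s0 t))"
    and "0 \<le> (\<integral>x. (\<Sum>t. w x * (\<beta> ^ t * multiplier_term lam (T x) x0 s0 t)) \<partial>M)"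
proof -
  define f where "f t = (\<lambda>x. w x * (\<beta> ^ t * multiplier_term lam (T x) x0 s0 t))" for t
  define c where "c t = slack_bound * (\<beta> ^ t * multiplier_mass lam s0 t)" for t
  have summable_c: "summable c"
    unfolding c_def by (rule summable_mult[OF summable_multiplier_mass[OF lam]])
  have f_le: "norm (f t x) \<le> c t" if x: "x \<in> space M" for t x
  proof -
    have "\<bar>w x\<bar> * \<bar>\<beta> ^ t * multiplier_term lam (T x) x0 s0 t\<bar> \<le> 1 * c t"
      using w_range[OF x] abs_multiplier_series_le[OF lam x0_in_X plan_in_T[OF x]]
      unfolding c_def by (intro mult_mono) auto
    then show ?thesis by (simp add: f_def abs_mult)
  qed
  have f_int: "integrable M (f t)" for t
    unfolding f_def
    by (rule integrable_weighted[where B="c t"])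
       (auto simp: c_def intro!: borel_measurable_times borel_measurable_const
          multiplier_term_measurable abs_multiplier_series_le[OF lam x0_in_X])
  have f_summable: "AE x in M. summable (\<lambda>t. norm (f t x))"
    by (rule AE_I2) (use f_le in \<open>auto intro: summable_comparison_test'[OF summable_c]\<close>)
  have "norm (\<integral>x. norm (f t x) \<partial>M) \<le> measure M (space M) * c t" for t
    using integral_mono[OF integrable_norm[OF f_int] _ f_le, of t] by simp
  then have f_int_summable: "summable (\<lambda>t. \<integral>x. norm (f t x) \<partial>M)"
    by (rule summable_comparison_test'[OF summable_mult[OF summable_c]])
  have f_nonneg: "0 \<le> integral\<^sup>L M (f t)" for t
    using integral_weighted_multiplier_term_nonneg[OF lam, of t] \<beta>_pos
    by (simp add: f_def mult.left_commute[of "w _"])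
  show "integrable M (\<lambda>x. \<Sum>t. w x * (\<beta> ^ t * multiplier_term lam (T x) x0 s0 t))"
    using integrable_suminf[OF f_int f_summable f_int_summable] by (simp add: f_def)
  show "0 \<le> (\<integral>x. (\<Sum>t. w x * (\<beta> ^ t * multiplier_term lam (T x) x0 s0 t)) \<partial>M)"
    using integral_suminf[OF f_int f_summable f_int_summable]
      suminf_nonneg[OF summable_integral[OF f_int f_summable f_int_summable] f_nonneg]
    by (simp add: f_def)
qed

lemma integral_weighted_plan_value_le_Lag:
  assumes lam: "lam \<in> Lam A \<beta> \<pi> s0"
  shows "integrable M (\<lambda>x. w x * Lag r g gbar \<zeta> \<beta> \<pi> \<gamma> (T x) lam x0 s0)"
    and "(\<integral>x. w x * plan_value \<gamma> (T x) x0 s0 \<partial>M) \<le> (\<integral>x. w x * Lag r g gbar \<zeta> \<beta> \<pi> \<gamma> (T x) lam x0 s0 \<partial>M)"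
proof -
  note series = weighted_multiplier_series[OF lam]
  have value_int: "integrable M (\<lambda>x. w x * plan_value \<gamma> (T x) x0 s0)"
    by (rule integrable_weighted[OF plan_value_measurable abs_plan_value_le[OF x0_in_X]])
  have Lag: "w x * Lag r g gbar \<zeta> \<beta> \<pi> \<gamma> (T x) lam x0 s0
      = w x * plan_value \<gamma> (T x) x0 s0 + (\<Sum>t. w x * (\<beta> ^ t * multiplier_term lam (T x) x0 s0 t))"
    if x: "x \<in> space M" for x
    using suminf_mult[OF summable_rabs_cancel[OF summable_multiplier_series[OF lam x0_in_X plan_in_T[OF x]]],
        of "w x"]
    by (simp add: Lag_eq[OF lam x0_in_X plan_in_T[OF x]] distrib_left)
  show "integrable M (\<lambda>x. w x * Lag r g gbar \<zeta> \<beta> \<pi> \<gamma> (T x) lam x0 s0)"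
    using value_int series(1) by (simp add: Lag cong: Bochner_Integration.integrable_cong)
  have "(\<integral>x. w x * Lag r g gbar \<zeta> \<beta> \<pi> \<gamma> (T x) lam x0 s0 \<partial>M)
      = (\<integral>x. w x * plan_value \<gamma> (T x) x0 s0 \<partial>M)
        + (\<integral>x. (\<Sum>t. w x * (\<beta> ^ t * multiplier_term lam (T x) x0 s0 t)) \<partial>M)"
    using value_int series(1) by (simp add: Lag cong: Bochner_Integration.integral_cong)
  then show "(\<integral>x. w x * plan_value \<gamma> (T x) x0 s0 \<partial>M) \<le> (\<integral>x. w x * Lag r g gbar \<zeta> \<beta> \<pi> \<gamma> (T x) lam x0 s0 \<partial>M)"
    using series(2) by simp
qed

lemma integral_weighted_plan_value_le_SUP_Lag:
  assumes lam: "lam \<in> Lam A \<beta> \<pi> s0"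
    and S: "(SUP a\<in>Atil_inf A p \<zeta> x0. ereal (Lag r g gbar \<zeta> \<beta> \<pi> \<gamma> a lam x0 s0)) = ereal S"
  shows "(\<integral>x. w x * plan_value \<gamma> (T x) x0 s0 \<partial>M) \<le> (\<integral>x. w x \<partial>M) * S"
proof -
  have "AE x in M. w x * Lag r g gbar \<zeta> \<beta> \<pi> \<gamma> (T x) lam x0 s0 \<le> w x * S"
    using feasible AE_space
  proof eventually_elim
    case (elim x)
    show ?case
    proof (cases "w x = 0")
      case False
      then have "ereal (Lag r g gbar \<zeta> \<beta> \<pi> \<gamma> (T x) lam x0 s0) \<le> ereal S"
        using elim(1) unfolding S[symmetric] by (auto intro: SUP_upper)
      then show ?thesis using w_range[OF elim(2)] by (simp add: mult_left_mono)
    qed simp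
  qed
  then have "(\<integral>x. w x * Lag r g gbar \<zeta> \<beta> \<pi> \<gamma> (T x) lam x0 s0 \<partial>M) \<le> (\<integral>x. w x * S \<partial>M)"
    using integrable_weighted[of "\<lambda>_. 1" 1]
    by (intro integral_mono_AE integral_weighted_plan_value_le_Lag(1)[OF lam]) auto
  then show ?thesis
    using integral_weighted_plan_value_le_Lag(2)[OF lam, where \<gamma>=\<gamma>] by simp
qed

lemma weighted_weak_duality:
  "ereal (\<integral>x. w x * plan_value \<gamma> (T x) x0 s0 \<partial>M) \<le> ereal (\<integral>x. w x \<partial>M) * Dval A p r g gbar \<zeta> \<beta> \<pi> \<gamma> x0 s0"
proof -
  define I where "I = (\<integral>x. w x * plan_value \<gamma> (T x) x0 s0 \<partial>M)"
  define \<mu> where "\<mu> = (\<integral>x. w x \<partial>M)"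
  have "0 \<le> \<mu>" unfolding \<mu>_def by (rule Bochner_Integration.integral_nonneg) (use w_range in auto)
  have I_le: "I \<le> \<mu> * S"
    if "lam \<in> Lam A \<beta> \<pi> s0" "(SUP a\<in>Atil_inf A p \<zeta> x0. ereal (Lag r g gbar \<zeta> \<beta> \<pi> \<gamma> a lam x0 s0)) = ereal S"
    for lam S
    unfolding I_def \<mu>_def by (rule integral_weighted_plan_value_le_SUP_Lag[OF that])
  show ?thesis
  proof (cases "\<mu> = 0")
    case True
    obtain S where "(SUP a\<in>Atil_inf A p \<zeta> x0. ereal (Lag r g gbar \<zeta> \<beta> \<pi> \<gamma> a (\<lambda>i h. 0) x0 s0)) = ereal S"
      using SUP_Lag_finite[OF Atil_inf_nonempty zero_in_Lam x0_in_X] by blast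
    then have "I \<le> 0" using I_le[OF zero_in_Lam] True by simp
    then show ?thesis using True by (simp add: I_def[symmetric] \<mu>_def[symmetric] zero_ereal_def[symmetric])
  next
    case False
    then have "0 < \<mu>" using \<open>0 \<le> \<mu>\<close> by simp
    have "ereal (I / \<mu>) \<le> Dval A p r g gbar \<zeta> \<beta> \<pi> \<gamma> x0 s0"
      unfolding Dval_def
    proof (rule INF_greatest)
      fix lam :: "'i \<Rightarrow> 's list \<times> 'a list \<Rightarrow> real" assume lam: "lam \<in> Lam A \<beta> \<pi> s0"
      obtain S where S: "(SUP a\<in>Atil_inf A p \<zeta> x0. ereal (Lag r g gbar \<zeta> \<beta> \<pi> \<gamma> a lam x0 s0)) = ereal S"
        using SUP_Lag_finite[OF Atil_inf_nonempty lam x0_in_X] by blast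
      then show "ereal (I / \<mu>) \<le> (SUP a\<in>Atil_inf A p \<zeta> x0. ereal (Lag r g gbar \<zeta> \<beta> \<pi> \<gamma> a lam x0 s0))"
        using I_le[OF lam S] \<open>0 < \<mu>\<close> by (simp add: divide_le_eq mult.commute)
    qed
    then have "ereal \<mu> * ereal (I / \<mu>) \<le> ereal \<mu> * Dval A p r g gbar \<zeta> \<beta> \<pi> \<gamma> x0 s0"
      by (rule ereal_mult_left_mono) (use \<open>0 \<le> \<mu>\<close> in simp)
    then show ?thesis using \<open>0 < \<mu>\<close> by (simp add: I_def[symmetric] \<mu>_def[symmetric])
  qed
qed

end

context bounded_model
begin

lemma weighted_lottery_of_lottery:
  assumes "x0 \<in> X" "Atil_inf A p \<zeta> x0 \<noteq> {}" "lottery_feasible A p \<zeta> \<beta> \<pi> g gbar P x0 s0"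
  shows "weighted_lottery \<pi> A X \<zeta> p r g gbar \<beta> Br Bg P (\<lambda>a. a) (\<lambda>_. 1) x0 s0"
proof -
  interpret prob_space P using assms(3) by (simp add: lottery_feasible_def)
  show ?thesis
    using assms unfolding lottery_feasible_def plan_space_def[symmetric]
    by unfold_locales (auto intro: measurable_ident_sets)
qed

lemma Dval_ge_lottery:
  assumes "x0 \<in> X" "Atil_inf A p \<zeta> x0 \<noteq> {}" and P: "lottery_feasible A p \<zeta> \<beta> \<pi> g gbar P x0 s0"
  shows "ereal (\<integral>a. plan_value \<gamma> a x0 s0 \<partial>P) \<le> Dval A p r g gbar \<zeta> \<beta> \<pi> \<gamma> x0 s0"
proof -
  interpret prob_space P using P by (simp add: lottery_feasible_def)
  show ?thesis
    using weighted_lottery.weighted_weak_duality[OF weighted_lottery_of_lottery[OF assms], of \<gamma>]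
    by (simp add: prob_space)
qed

end

section \<open>Models satisfying the Slater condition\<close>

locale slater_model = bounded_model \<pi> A X \<zeta> p r g gbar \<beta> Br Bg
  for \<pi> :: "'s::finite \<Rightarrow> 's \<Rightarrow> real" and A :: "'a set" and X :: "'x set"
    and \<zeta> :: "'x \<Rightarrow> 'a \<Rightarrow> 's \<Rightarrow> 'x" and p r :: "'x \<Rightarrow> 'a \<Rightarrow> 's \<Rightarrow> real"
    and g :: "'i::finite \<Rightarrow> 'x \<Rightarrow> 'a \<Rightarrow> 's \<Rightarrow> real" and gbar :: "'i \<Rightarrow> real"
    and \<beta> Br Bg :: real +
  fixes \<epsilon> :: real
  assumes Atil_inf_nonempty: "\<And>x0. x0 \<in> X \<Longrightarrow> Atil_inf A p \<zeta> x0 \<noteq> {}"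
    and \<epsilon>_pos: "0 < \<epsilon>"
    and slater: "\<And>s0 x0. x0 \<in> X \<Longrightarrow> \<exists>P. lottery_feasible A p \<zeta> \<beta> \<pi> g gbar P x0 s0 \<and>
                 (\<forall>i. \<epsilon> \<le> (\<integral>a. disc_cont (g i) \<zeta> \<beta> \<pi> a x0 [s0] - gbar i \<partial>P))"
begin

definition dual_value :: "('i \<Rightarrow> real) \<Rightarrow> 'x \<Rightarrow> 's \<Rightarrow> real" where
  "dual_value \<gamma> x0 s0 = real_of_ereal (Dval A p r g gbar \<zeta> \<beta> \<pi> \<gamma> x0 s0)"

lemma Dval_eq_dual_value:
  assumes "x0 \<in> X"
  shows "Dval A p r g gbar \<zeta> \<beta> \<pi> \<gamma> x0 s0 = ereal (dual_value \<gamma> x0 s0)"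
proof -
  obtain P where "lottery_feasible A p \<zeta> \<beta> \<pi> g gbar P x0 s0" using slater[OF assms] by blast
  then have "ereal (\<integral>a. plan_value \<gamma> a x0 s0 \<partial>P) \<le> Dval A p r g gbar \<zeta> \<beta> \<pi> \<gamma> x0 s0"
    by (rule Dval_ge_lottery[OF assms Atil_inf_nonempty[OF assms]])
  then show ?thesis
    using Dval_le_value_bound[OF assms, of \<gamma> s0] unfolding dual_value_def
    by (cases "Dval A p r g gbar \<zeta> \<beta> \<pi> \<gamma> x0 s0") auto
qed

lemma dual_value_gamma_le:
  assumes x0: "x0 \<in> X"
  shows "dual_value \<gamma>1 x0 s0 \<le> dual_value \<gamma>2 x0 s0 + (\<Sum>i\<in>UNIV. \<bar>\<gamma>1 i - \<gamma>2 i\<bar>) * disc_bound_g"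
proof -
  define c where "c = (\<Sum>i\<in>UNIV. \<bar>\<gamma>1 i - \<gamma>2 i\<bar>) * disc_bound_g"
  have "ereal (dual_value \<gamma>1 x0 s0 - c) \<le> Dval A p r g gbar \<zeta> \<beta> \<pi> \<gamma>2 x0 s0"
    unfolding Dval_def
  proof (rule INF_greatest)
    fix lam :: "'i \<Rightarrow> 's list \<times> 'a list \<Rightarrow> real" assume lam: "lam \<in> Lam A \<beta> \<pi> s0"
    let ?S2 = "SUP a\<in>Atil_inf A p \<zeta> x0. ereal (Lag r g gbar \<zeta> \<beta> \<pi> \<gamma>2 a lam x0 s0)"
    have "ereal (dual_value \<gamma>1 x0 s0) \<le> (SUP a\<in>Atil_inf A p \<zeta> x0. ereal (Lag r g gbar \<zeta> \<beta> \<pi> \<gamma>1 a lam x0 s0))"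
      unfolding Dval_eq_dual_value[OF x0, symmetric] Dval_def by (rule INF_lower[OF lam])
    also have "\<dots> \<le> ?S2 + ereal c"
      by (intro SUP_least order.trans[OF _ add_right_mono[OF SUP_upper]])
         (auto simp: c_def intro!: Lag_gamma_le[OF lam x0] Atil_inf_plan_in)
    finally show "ereal (dual_value \<gamma>1 x0 s0 - c) \<le> ?S2"
      by (cases ?S2) auto
  qed
  then show ?thesis unfolding Dval_eq_dual_value[OF x0] c_def by simp
qed

definition bellman_term :: "('i \<Rightarrow> real) \<Rightarrow> 'x \<Rightarrow> 's \<Rightarrow> ('i \<Rightarrow> real) \<Rightarrow> 'a \<Rightarrow> real" where
  "bellman_term \<gamma> x s lam a0 = stage_payoff \<gamma> lam x s a0
     + \<beta> * (\<Sum>s'\<in>UNIV. \<pi> s s' * dual_value (\<lambda>i. \<gamma> i + lam i) (\<zeta> x a0 s) s')"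

definition bellman_max :: "('i \<Rightarrow> real) \<Rightarrow> 'x \<Rightarrow> 's \<Rightarrow> ('i \<Rightarrow> real) \<Rightarrow> real" where
  "bellman_max \<gamma> x s lam = Max (bellman_term \<gamma> x s lam ` Atil A p x s)"

lemma finite_Atil: "finite (Atil A p x s)"
  unfolding Atil_def using A_fin by simp

lemma Atil_nonempty: "x \<in> X \<Longrightarrow> Atil A p x s \<noteq> {}"
  using Atil_inf_nonempty[of x] Atil_inf_first_action[of _ A p \<zeta> x s] by blast

lemma bellman_term_le_max: "a0 \<in> Atil A p x s \<Longrightarrow> bellman_term \<gamma> x s lam a0 \<le> bellman_max \<gamma> x s lam"
  unfolding bellman_max_def by (simp add: finite_Atil)

lemma bellman_max_attained:
  "x \<in> X \<Longrightarrow> \<exists>a0\<in>Atil A p x s. bellman_max \<gamma> x s lam = bellman_term \<gamma> x s lam a0"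
proof -
  assume "x \<in> X"
  then have "bellman_max \<gamma> x s lam \<in> bellman_term \<gamma> x s lam ` Atil A p x s"
    unfolding bellman_max_def by (intro Max_in) (auto simp: finite_Atil Atil_nonempty)
  then show ?thesis by auto
qed

lemma bellman_obj_eq:
  assumes x: "x \<in> X"
  shows "bellman_obj A p r g gbar \<zeta> \<beta> \<pi> \<gamma> x s lam = ereal (bellman_max \<gamma> x s lam)"
proof -
  have "ereal (stage_payoff \<gamma> lam x s a) + ereal \<beta> * (\<Sum>s'\<in>UNIV. ereal (\<pi> s s') *
          Dval A p r g gbar \<zeta> \<beta> \<pi> (\<lambda>i. \<gamma> i + lam i) (\<zeta> x a s) s') = ereal (bellman_term \<gamma> x s lam a)"
    if "a \<in> Atil A p x s" for a
  proof -
    have "\<zeta> x a s \<in> X" using that x \<zeta>_in_X by (auto simp: Atil_def)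
    then show ?thesis by (simp add: Dval_eq_dual_value bellman_term_def sum_ereal)
  qed
  then have "bellman_obj A p r g gbar \<zeta> \<beta> \<pi> \<gamma> x s lam = (SUP a\<in>Atil A p x s. ereal (bellman_term \<gamma> x s lam a))"
    unfolding bellman_obj_def stage_payoff_def by (intro SUP_cong) auto
  also have "\<dots> = ereal (bellman_max \<gamma> x s lam)"
  proof (rule antisym)
    obtain a where "a \<in> Atil A p x s" "bellman_max \<gamma> x s lam = bellman_term \<gamma> x s lam a"
      using bellman_max_attained[OF x] by blast
    then show "ereal (bellman_max \<gamma> x s lam) \<le> (SUP a\<in>Atil A p x s. ereal (bellman_term \<gamma> x s lam a))"
      by (auto intro: SUP_upper2)
  qed (rule SUP_least, simp add: bellman_term_le_max)
  finally show ?thesis .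
qed

definition bellman_lipschitz_const :: real where
  "bellman_lipschitz_const = Bg + (\<Sum>i\<in>UNIV. \<bar>gbar i\<bar>) + \<beta> * disc_bound_g"

lemma bellman_lipschitz_const_nonneg: "0 \<le> bellman_lipschitz_const"
  unfolding bellman_lipschitz_const_def using Bg_nonneg \<beta>_pos disc_bound_g_nonneg
  by (simp add: sum_nonneg)

lemma stage_payoff_lam_le:
  assumes "x \<in> X" "a0 \<in> A"
  shows "stage_payoff \<gamma> l1 x s a0
    \<le> stage_payoff \<gamma> l2 x s a0 + (Bg + (\<Sum>i\<in>UNIV. \<bar>gbar i\<bar>)) * (\<Sum>i\<in>UNIV. \<bar>l1 i - l2 i\<bar>)"
proof -
  have "(l1 i - l2 i) * (g i x a0 s - gbar i) \<le> \<bar>l1 i - l2 i\<bar> * (Bg + (\<Sum>i\<in>UNIV. \<bar>gbar i\<bar>))" for i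
  proof -
    have "\<bar>gbar i\<bar> \<le> (\<Sum>i\<in>UNIV. \<bar>gbar i\<bar>)" by (rule member_le_sum) auto
    then have "\<bar>g i x a0 s - gbar i\<bar> \<le> Bg + (\<Sum>i\<in>UNIV. \<bar>gbar i\<bar>)"
      using g_bound[OF assms, of i s] by linarith
    then have "\<bar>l1 i - l2 i\<bar> * \<bar>g i x a0 s - gbar i\<bar> \<le> \<bar>l1 i - l2 i\<bar> * (Bg + (\<Sum>i\<in>UNIV. \<bar>gbar i\<bar>))"
      by (rule mult_left_mono) simp
    moreover have "(l1 i - l2 i) * (g i x a0 s - gbar i) \<le> \<bar>l1 i - l2 i\<bar> * \<bar>g i x a0 s - gbar i\<bar>"
      unfolding abs_mult[symmetric] by (rule abs_ge_self)
    ultimately show ?thesis by (rule order.trans[rotated])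
  qed
  then have "(\<Sum>i\<in>UNIV. (l1 i - l2 i) * (g i x a0 s - gbar i))
      \<le> (Bg + (\<Sum>i\<in>UNIV. \<bar>gbar i\<bar>)) * (\<Sum>i\<in>UNIV. \<bar>l1 i - l2 i\<bar>)"
    by (simp add: sum_mono sum_distrib_left mult.commute)
  moreover have "stage_payoff \<gamma> l1 x s a0 - stage_payoff \<gamma> l2 x s a0
      = (\<Sum>i\<in>UNIV. (l1 i - l2 i) * (g i x a0 s - gbar i))"
    unfolding stage_payoff_def by (simp add: sum_subtractf[symmetric] algebra_simps)
  ultimately show ?thesis by linarith
qed

lemma bellman_term_lam_le:
  assumes x: "x \<in> X" and a0: "a0 \<in> A"
  shows "bellman_term \<gamma> x s l1 a0 \<le> bellman_term \<gamma> x s l2 a0 + bellman_lipschitz_const * (\<Sum>i\<in>UNIV. \<bar>l1 i - l2 i\<bar>)"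
proof -
  define d where "d = (\<Sum>i\<in>UNIV. \<bar>l1 i - l2 i\<bar>)"
  have x': "\<zeta> x a0 s \<in> X" by (rule \<zeta>_in_X[OF x a0])
  have "(\<Sum>s'\<in>UNIV. \<pi> s s' * dual_value (\<lambda>i. \<gamma> i + l1 i) (\<zeta> x a0 s) s')
      \<le> (\<Sum>s'\<in>UNIV. \<pi> s s' * (dual_value (\<lambda>i. \<gamma> i + l2 i) (\<zeta> x a0 s) s' + d * disc_bound_g))"
    by (rule sum_mono, rule mult_left_mono[OF _ pi_nonneg])
       (use dual_value_gamma_le[OF x', of "\<lambda>i. \<gamma> i + l1 i" _ "\<lambda>i. \<gamma> i + l2 i"] in \<open>simp add: d_def\<close>)
  also have "\<dots> = (\<Sum>s'\<in>UNIV. \<pi> s s' * dual_value (\<lambda>i. \<gamma> i + l2 i) (\<zeta> x a0 s) s') + d * disc_bound_g"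
    by (simp add: distrib_left sum.distrib sum_distrib_right[symmetric] pi_stoch)
  finally have "\<beta> * (\<Sum>s'\<in>UNIV. \<pi> s s' * dual_value (\<lambda>i. \<gamma> i + l1 i) (\<zeta> x a0 s) s')
      \<le> \<beta> * ((\<Sum>s'\<in>UNIV. \<pi> s s' * dual_value (\<lambda>i. \<gamma> i + l2 i) (\<zeta> x a0 s) s') + d * disc_bound_g)"
    using \<beta>_pos by (simp add: mult_left_mono)
  then show ?thesis
    using stage_payoff_lam_le[OF x a0, of \<gamma> l1 s l2]
    unfolding bellman_term_def bellman_lipschitz_const_def d_def[symmetric]
    by (simp add: algebra_simps)
qed

lemma bellman_max_lam_le:
  assumes x: "x \<in> X"
  shows "bellman_max \<gamma> x s l1 \<le> bellman_max \<gamma> x s l2 + bellman_lipschitz_const * (\<Sum>i\<in>UNIV. \<bar>l1 i - l2 i\<bar>)"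
proof -
  obtain a where a: "a \<in> Atil A p x s" and max: "bellman_max \<gamma> x s l1 = bellman_term \<gamma> x s l1 a"
    using bellman_max_attained[OF x] by blast
  have "a \<in> A" using a by (simp add: Atil_def)
  then show ?thesis
    using max bellman_term_lam_le[OF x, of a \<gamma> s l1 l2] bellman_term_le_max[OF a, of \<gamma> l2] by linarith
qed

lemma weighted_lottery_conditional:
  assumes x: "x \<in> X" and a0: "a0 \<in> A" and P: "lottery_feasible A p \<zeta> \<beta> \<pi> g gbar P x s"
  shows "weighted_lottery \<pi> A X \<zeta> p r g gbar \<beta> Br Bg P (shift_plan s) (first_action_ind s a0) (\<zeta> x a0 s) s'"
proof -
  have "prob_space P" and sets: "sets P = sets (plan_space A)"
    and ae: "AE a in P. a \<in> Atil_inf A p \<zeta> x"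
    and cons: "\<And>t sh ah i. sh \<in> hists s t \<Longrightarrow> length ah = t \<Longrightarrow> set ah \<subseteq> A \<Longrightarrow>
        0 \<le> (\<integral>a. (if act_hist a sh = ah then 1 else 0) * (disc (g i) a x sh - gbar i) \<partial>P)"
    using P unfolding lottery_feasible_def plan_space_def by auto
  interpret prob_space P by fact
  have x': "\<zeta> x a0 s \<in> X" by (rule \<zeta>_in_X[OF x a0])
  show ?thesis
  proof unfold_locales
    show "shift_plan s \<in> measurable P (plan_space A)" by (rule shift_plan_measurable[OF sets])
    show "first_action_ind s a0 \<in> borel_measurable P"
      unfolding measurable_cong_sets[OF sets refl] by (rule first_action_ind_measurable[OF A_fin])
    show "AE a in P. first_action_ind s a0 a \<noteq> 0 \<longrightarrow> shift_plan s a \<in> Atil_inf A p \<zeta> (\<zeta> x a0 s)"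
      using ae by eventually_elim (auto simp: first_action_ind_def dest: Atil_inf_shift_plan[where s=s])
    fix t sh ah i assume sh: "sh \<in> hists s' t" and ah: "length ah = t" "set ah \<subseteq> A"
    then have "sh \<noteq> []" by (auto simp: hists_def)
    then have "(\<integral>a. first_action_ind s a0 a * ((if act_hist (shift_plan s a) sh = ah then 1 else 0) *
          (disc (g i) (shift_plan s a) (\<zeta> x a0 s) sh - gbar i)) \<partial>P)
        = (\<integral>a. (if act_hist a (s # sh) = a0 # ah then 1 else 0) * (disc (g i) a x (s # sh) - gbar i) \<partial>P)"
      by (intro Bochner_Integration.integral_cong)
         (auto simp: first_action_ind_def act_hist_shift_plan disc_cont_shift_plan)
    also have "\<dots> \<ge> 0"
      by (rule cons) (use sh ah a0 in \<open>auto simp: hists_def\<close>)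
    finally show "0 \<le> (\<integral>a. first_action_ind s a0 a * ((if act_hist (shift_plan s a) sh = ah then 1 else 0) *
          (disc (g i) (shift_plan s a) (\<zeta> x a0 s) sh - gbar i)) \<partial>P)" .
  qed (auto simp: first_action_ind_def x' Atil_inf_nonempty)
qed

lemma integral_conditional_plan_value_le:
  assumes x: "x \<in> X" and a0: "a0 \<in> A" and P: "lottery_feasible A p \<zeta> \<beta> \<pi> g gbar P x s"
  shows "(\<integral>a. first_action_ind s a0 a * plan_value (\<lambda>i. \<gamma> i + lam i) a x s \<partial>P)
    \<le> (\<integral>a. first_action_ind s a0 a \<partial>P) * (bellman_term \<gamma> x s lam a0 + (\<Sum>i\<in>UNIV. lam i * gbar i))"
proof -
  let ?w = "first_action_ind s a0" and ?x' = "\<zeta> x a0 s" and ?gl = "\<lambda>i. \<gamma> i + lam i"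
  let ?V = "\<lambda>s' a. ?w a * plan_value ?gl (shift_plan s a) ?x' s'"
  define q where "q = (\<integral>a. ?w a \<partial>P)"
  define c where "c = stage_payoff \<gamma> lam x s a0 + (\<Sum>i\<in>UNIV. lam i * gbar i)"
  have sets: "sets P = sets (plan_space A)" using P by (simp add: lottery_feasible_def plan_space_def)
  have x': "?x' \<in> X" by (rule \<zeta>_in_X[OF x a0])
  note cond = weighted_lottery_conditional[OF x a0 P]
  have w_int: "integrable P ?w"
    using weighted_lottery.integrable_weighted[OF cond, of "\<lambda>_. 1" 1] by simp
  have V_int: "integrable P (?V s')" for s'
    by (rule weighted_lottery.integrable_weighted[OF cond plan_value_measurable abs_plan_value_le[OF x']])
  have V_le: "(\<integral>a. ?V s' a \<partial>P) \<le> q * dual_value ?gl ?x' s'" for s'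
    using weighted_lottery.weighted_weak_duality[OF cond, of ?gl] by (simp add: Dval_eq_dual_value[OF x'] q_def)
  have "?w a * plan_value ?gl a x s = ?w a * c + \<beta> * (\<Sum>s'\<in>UNIV. \<pi> s s' * ?V s' a)"
    if "a \<in> space P" for a
  proof -
    have "plan_in A a" using that sets_eq_imp_space_eq[OF sets] plan_in_space by simp
    then show ?thesis
      by (cases "a [s] = a0")
         (simp_all add: first_action_ind_def plan_value_unfold[OF x] c_def)
  qed
  then have "(\<integral>a. ?w a * plan_value ?gl a x s \<partial>P) = q * c + \<beta> * (\<Sum>s'\<in>UNIV. \<pi> s s' * (\<integral>a. ?V s' a \<partial>P))"
    using w_int V_int by (simp add: q_def cong: Bochner_Integration.integral_cong)
  also have "\<dots> \<le> q * c + \<beta> * (\<Sum>s'\<in>UNIV. \<pi> s s' * (q * dual_value ?gl ?x' s'))"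
    using \<beta>_pos by (intro add_left_mono mult_left_mono sum_mono V_le pi_nonneg) auto
  also have "\<dots> = q * (bellman_term \<gamma> x s lam a0 + (\<Sum>i\<in>UNIV. lam i * gbar i))"
    by (simp add: bellman_term_def c_def algebra_simps sum_distrib_left)
  finally show ?thesis unfolding q_def .
qed

lemma integral_plan_value_le_bellman_max:
  assumes x: "x \<in> X" and P: "lottery_feasible A p \<zeta> \<beta> \<pi> g gbar P x s"
  shows "(\<integral>a. plan_value (\<lambda>i. \<gamma> i + lam i) a x s \<partial>P) \<le> bellman_max \<gamma> x s lam + (\<Sum>i\<in>UNIV. lam i * gbar i)"
proof -
  define q where "q a0 = (\<integral>a. first_action_ind s a0 a \<partial>P)" for a0
  define c where "c = (\<Sum>i\<in>UNIV. lam i * gbar i)"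
  have "prob_space P" and sets: "sets P = sets (plan_space A)"
    using P unfolding lottery_feasible_def plan_space_def by auto
  interpret prob_space P by fact
  note split = integral_split_first_action[OF A_fin \<open>prob_space P\<close> sets]
  have q_nonneg: "0 \<le> q a0" for a0
    unfolding q_def by (rule Bochner_Integration.integral_nonneg) (simp add: first_action_ind_def)
  have q_sum: "(\<Sum>a0\<in>A. q a0) = 1"
    using split[of "\<lambda>_. 1" 1 s] by (simp add: q_def prob_space)
  have "(\<integral>a. plan_value (\<lambda>i. \<gamma> i + lam i) a x s \<partial>P)
      = (\<Sum>a0\<in>A. \<integral>a. first_action_ind s a0 a * plan_value (\<lambda>i. \<gamma> i + lam i) a x s \<partial>P)"
    by (rule split[OF plan_value_measurable abs_plan_value_le[OF x]])
  also have "\<dots> \<le> (\<Sum>a0\<in>A. q a0 * (bellman_term \<gamma> x s lam a0 + c))"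
    unfolding q_def c_def by (intro sum_mono integral_conditional_plan_value_le[OF x _ P])
  also have "\<dots> \<le> (\<Sum>a0\<in>A. q a0 * (bellman_max \<gamma> x s lam + c))"
    using q_nonneg integral_first_action_ind_outside_Atil[OF P] bellman_term_le_max
    by (intro sum_mono) (metis q_def add_right_mono mult_left_mono mult_zero_left)
  also have "\<dots> = bellman_max \<gamma> x s lam + c"
    by (simp add: sum_distrib_right[symmetric] q_sum)
  finally show ?thesis unfolding c_def .
qed

lemma integral_plan_value_ge_slater:
  assumes x: "x \<in> X" and P: "lottery_feasible A p \<zeta> \<beta> \<pi> g gbar P x s"
    and slack: "\<And>i. \<epsilon> \<le> (\<integral>a. disc (g i) a x [s] - gbar i \<partial>P)" and lam: "\<And>i. 0 \<le> lam i"
  shows "- value_bound \<gamma> + \<epsilon> * (\<Sum>i\<in>UNIV. lam i) + (\<Sum>i\<in>UNIV. lam i * gbar i)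
    \<le> (\<integral>a. plan_value (\<lambda>i. \<gamma> i + lam i) a x s \<partial>P)"
proof -
  have "prob_space P" and sets: "sets P = sets (plan_space A)"
    using P unfolding lottery_feasible_def plan_space_def by auto
  interpret prob_space P by fact
  have int: "integrable P F" if "F \<in> borel_measurable (plan_space A)" "\<And>a. plan_in A a \<Longrightarrow> \<bar>F a\<bar> \<le> B"
    for F :: "('s list \<Rightarrow> 'a) \<Rightarrow> real" and B
    by (rule integrable_plan_function[OF finite_measure_axioms sets that])
  have V_int: "integrable P (\<lambda>a. plan_value \<gamma> a x s)"
    by (rule int[OF plan_value_measurable abs_plan_value_le[OF x]])
  have g_int: "integrable P (\<lambda>a. disc (g i) a x [s])" for i
    by (rule int[OF disc_measurable]) (rule abs_disc_g_le[OF x], simp_all)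
  have "(\<integral>a. - value_bound \<gamma> \<partial>P) \<le> (\<integral>a. plan_value \<gamma> a x s \<partial>P)"
  proof (rule integral_mono[OF integrable_const V_int])
    fix a assume "a \<in> space P"
    then have "plan_in A a" using sets_eq_imp_space_eq[OF sets] plan_in_space by simp
    from abs_plan_value_le[OF x this, of \<gamma> s] show "- value_bound \<gamma> \<le> plan_value \<gamma> a x s" by linarith
  qed
  then have "- value_bound \<gamma> \<le> (\<integral>a. plan_value \<gamma> a x s \<partial>P)" by (simp add: prob_space)
  moreover have "lam i * (\<epsilon> + gbar i) \<le> lam i * (\<integral>a. disc (g i) a x [s] \<partial>P)" for i
  proof (rule mult_left_mono[OF _ lam])
    show "\<epsilon> + gbar i \<le> (\<integral>a. disc (g i) a x [s] \<partial>P)"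
      using slack[of i] by (simp add: Bochner_Integration.integral_diff[OF g_int integrable_const] prob_space)
  qed
  then have "(\<Sum>i\<in>UNIV. lam i * (\<epsilon> + gbar i)) \<le> (\<Sum>i\<in>UNIV. lam i * (\<integral>a. disc (g i) a x [s] \<partial>P))"
    by (rule sum_mono)
  moreover have "(\<integral>a. plan_value (\<lambda>i. \<gamma> i + lam i) a x s \<partial>P)
      = (\<integral>a. plan_value \<gamma> a x s \<partial>P) + (\<Sum>i\<in>UNIV. lam i * (\<integral>a. disc (g i) a x [s] \<partial>P))"
    using V_int g_int by (simp add: plan_value_add)
  ultimately show ?thesis
    by (simp add: distrib_left sum.distrib sum_distrib_left[symmetric] mult.commute[of _ \<epsilon>])
qed

lemma bellman_max_coercive:
  assumes x: "x \<in> X" and lam: "\<And>i. 0 \<le> lam i"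
  shows "- value_bound \<gamma> + \<epsilon> * (\<Sum>i\<in>UNIV. lam i) \<le> bellman_max \<gamma> x s lam"
proof -
  obtain P where P: "lottery_feasible A p \<zeta> \<beta> \<pi> g gbar P x s"
    and slack: "\<And>i. \<epsilon> \<le> (\<integral>a. disc (g i) a x [s] - gbar i \<partial>P)"
    using slater[OF x] by blast
  show ?thesis
    using integral_plan_value_ge_slater[where lam=lam and \<gamma>=\<gamma>, OF x P slack lam]
      integral_plan_value_le_bellman_max[OF x P, of \<gamma> lam] by linarith
qed

lemma bellman_obj_attains_INF:
  assumes x: "x \<in> X"
  shows "\<exists>lam_star. (\<forall>i. 0 \<le> lam_star i) \<and>
    bellman_obj A p r g gbar \<zeta> \<beta> \<pi> \<gamma> x s lam_star
      = (INF lam\<in>{lam. \<forall>i. 0 \<le> lam i}. bellman_obj A p r g gbar \<zeta> \<beta> \<pi> \<gamma> x s lam)"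
proof -
  obtain l where l: "\<forall>i. 0 \<le> l i" and min: "\<And>l'. \<forall>i. 0 \<le> l' i \<Longrightarrow> bellman_max \<gamma> x s l \<le> bellman_max \<gamma> x s l'"
    using lipschitz_coercive_attains_min[OF bellman_max_lam_le[OF x] bellman_lipschitz_const_nonneg
        bellman_max_coercive[OF x] \<epsilon>_pos]
    by blast
  have "bellman_obj A p r g gbar \<zeta> \<beta> \<pi> \<gamma> x s l
      = (INF lam\<in>{lam. \<forall>i. 0 \<le> lam i}. bellman_obj A p r g gbar \<zeta> \<beta> \<pi> \<gamma> x s lam)"
    using l min by (intro antisym INF_greatest INF_lower) (auto simp: bellman_obj_eq[OF x])
  with l show ?thesis by blast
qed

end


lemma slater_model_intro:
  fixes \<pi> :: "'s::finite \<Rightarrow> 's \<Rightarrow> real" and g :: "'i::finite \<Rightarrow> 'x \<Rightarrow> 'a \<Rightarrow> 's \<Rightarrow> real"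
  assumes pi_pos: "\<forall>s s'. 0 < \<pi> s s'" and pi_stoch: "\<forall>s. (\<Sum>s'\<in>UNIV. \<pi> s s') = 1"
    and A_fin: "finite A" and zeta_X: "\<forall>x\<in>X. \<forall>a\<in>A. \<forall>s. \<zeta> x a s \<in> X"
    and r_bdd: "\<exists>B. \<forall>x\<in>X. \<forall>a\<in>A. \<forall>s. \<bar>r x a s\<bar> \<le> B"
    and g_bdd: "\<forall>i. \<exists>B. \<forall>x\<in>X. \<forall>a\<in>A. \<forall>s. \<bar>g i x a s\<bar> \<le> B"
    and beta: "0 < \<beta>" "\<beta> < 1"
    and standing: "\<forall>x0\<in>X. \<forall>s0. \<exists>a. feasible_plan A p \<zeta> \<beta> \<pi> g gbar a x0 s0"
    and slater: "\<exists>\<epsilon>>0. \<forall>s0. \<forall>x0\<in>X. \<exists>P. lottery_feasible A p \<zeta> \<beta> \<pi> g gbar P x0 s0 \<and>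
                   (\<forall>i. \<epsilon> \<le> (\<integral>a. disc_cont (g i) \<zeta> \<beta> \<pi> a x0 [s0] - gbar i \<partial>P))"
  shows "\<exists>Br Bg \<epsilon>. slater_model \<pi> A X \<zeta> p r g gbar \<beta> Br Bg \<epsilon>"
proof -
  obtain Br where Br: "\<forall>x\<in>X. \<forall>a\<in>A. \<forall>s. \<bar>r x a s\<bar> \<le> Br" using r_bdd by blast
  obtain Bi where Bi: "\<And>i. \<forall>x\<in>X. \<forall>a\<in>A. \<forall>s. \<bar>g i x a s\<bar> \<le> Bi i" using g_bdd by metis
  obtain \<epsilon> where \<epsilon>: "\<epsilon> > 0" and lotteries: "\<forall>s0. \<forall>x0\<in>X. \<exists>P. lottery_feasible A p \<zeta> \<beta> \<pi> g gbar P x0 s0 \<and>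
                   (\<forall>i. \<epsilon> \<le> (\<integral>a. disc_cont (g i) \<zeta> \<beta> \<pi> a x0 [s0] - gbar i \<partial>P))"
    using slater by blast
  have "slater_model \<pi> A X \<zeta> p r g gbar \<beta> \<bar>Br\<bar> (\<Sum>i\<in>UNIV. \<bar>Bi i\<bar>) \<epsilon>"
  proof unfold_locales
    show "0 \<le> \<pi> s s'" for s s' using pi_pos less_imp_le by blast
    show "(\<Sum>s'\<in>UNIV. \<pi> s s') = 1" for s using pi_stoch by blast
    show "\<zeta> x a s \<in> X" if "x \<in> X" "a \<in> A" for x a s using zeta_X that by blast
    show "\<bar>r x a s\<bar> \<le> \<bar>Br\<bar>" if "x \<in> X" "a \<in> A" for x a s
      using Br that abs_ge_self[of Br] by (meson order.trans)
    show "\<bar>g i x a s\<bar> \<le> (\<Sum>i\<in>UNIV. \<bar>Bi i\<bar>)" if "x \<in> X" "a \<in> A" for i x a s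
    proof -
      have "\<bar>g i x a s\<bar> \<le> \<bar>Bi i\<bar>" using Bi[of i] that abs_ge_self[of "Bi i"] by (meson order.trans)
      also have "\<dots> \<le> (\<Sum>i\<in>UNIV. \<bar>Bi i\<bar>)" by (rule member_le_sum) auto
      finally show ?thesis .
    qed
    show "0 \<le> (\<Sum>i\<in>UNIV. \<bar>Bi i\<bar>)" by (simp add: sum_nonneg)
    show "Atil_inf A p \<zeta> x0 \<noteq> {}" if "x0 \<in> X" for x0
      using standing that unfolding feasible_plan_def by blast
    show "\<exists>P. lottery_feasible A p \<zeta> \<beta> \<pi> g gbar P x0 s0 \<and>
        (\<forall>i. \<epsilon> \<le> (\<integral>a. disc_cont (g i) \<zeta> \<beta> \<pi> a x0 [s0] - gbar i \<partial>P))" if "x0 \<in> X" for s0 x0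
      using lotteries that by blast
  qed (simp_all add: A_fin beta \<epsilon>)
  then show ?thesis by blast
qed

theorem theorem5p1:
  fixes \<pi> :: "'s::finite \<Rightarrow> 's \<Rightarrow> real"
    and A :: "(real ^ 'n) set"
    and X :: "(real ^ 'm) set"
    and \<zeta> :: "real ^ 'm \<Rightarrow> real ^ 'n \<Rightarrow> 's \<Rightarrow> real ^ 'm"
    and p r :: "real ^ 'm \<Rightarrow> real ^ 'n \<Rightarrow> 's \<Rightarrow> real"
    and g :: "'i::finite \<Rightarrow> real ^ 'm \<Rightarrow> real ^ 'n \<Rightarrow> 's \<Rightarrow> real"
    and gbar :: "'i \<Rightarrow> real"
    and \<beta> :: real
  assumes pi_pos: "\<forall>s s'. 0 < \<pi> s s'"
    and pi_stoch: "\<forall>s. (\<Sum>s'\<in>UNIV. \<pi> s s') = 1"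
    and A_fin: "finite A"
    and X_count: "countable X"
    and zeta_X: "\<forall>x\<in>X. \<forall>a\<in>A. \<forall>s. \<zeta> x a s \<in> X"
    and r_bdd: "\<exists>B. \<forall>x\<in>X. \<forall>a\<in>A. \<forall>s. \<bar>r x a s\<bar> \<le> B"
    and g_bdd: "\<forall>i. \<exists>B. \<forall>x\<in>X. \<forall>a\<in>A. \<forall>s. \<bar>g i x a s\<bar> \<le> B"
    and beta: "0 < \<beta>" "\<beta> < 1"
    and standing: "\<forall>x0\<in>X. \<forall>s0. \<exists>a. feasible_plan A p \<zeta> \<beta> \<pi> g gbar a x0 s0"
    and slater: "\<exists>\<epsilon>>0. \<forall>s0. \<forall>x0\<in>X. \<exists>P. lottery_feasible A p \<zeta> \<beta> \<pi> g gbar P x0 s0 \<and>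
                   (\<forall>i. \<epsilon> \<le> (\<integral>a. disc_cont (g i) \<zeta> \<beta> \<pi> a x0 [s0] - gbar i \<partial>P))"
  shows "\<forall>x\<in>X. \<forall>s. \<forall>\<gamma>. (\<forall>i. 0 \<le> \<gamma> i) \<longrightarrow>
           (\<exists>lam_star. (\<forall>i. 0 \<le> lam_star i) \<and>
              bellman_obj A p r g gbar \<zeta> \<beta> \<pi> \<gamma> x s lam_star
              = (INF lam\<in>{lam. \<forall>i. 0 \<le> lam i}. bellman_obj A p r g gbar \<zeta> \<beta> \<pi> \<gamma> x s lam))"
proof -
  obtain Br Bg \<epsilon> where "slater_model \<pi> A X \<zeta> p r g gbar \<beta> Br Bg \<epsilon>"
    using slater_model_intro[OF pi_pos pi_stoch A_fin zeta_X r_bdd g_bdd beta standing slater] by blast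
  then interpret slater_model \<pi> A X \<zeta> p r g gbar \<beta> Br Bg \<epsilon> .
  show ?thesis using bellman_obj_attains_INF by blast
qed

end
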